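(* Suppose that $f\in E^2$, $n\in\mathbb N$, $T>1$ and $M>1$. Then for any $\theta\in(0,1]$, $i\in\{0,1,\dots,\lfloor\theta n\rfloor-1\}$, and $z\in\mathbb R^2$ such that $\|z-f(i/n)\|<1/n^2$, \[\mathbb Q\big(\xi^T|_{[i/n,\theta]}\in\Gamma_{M,T}(f,n)|_{[i/n,\theta]}\,\big|\,\xi^T(i/n)=z\big)\le\exp\Big(-T\sum_{j=i}^{\lfloor\theta n\rfloor-1}\big(\mathcal E^+_X(I_j,\Gamma_{M,T}(f,n),T)+\mathcal E^+_Y(I_j,\Gamma_{M,T}(f,n),T)\big)\Big).\]
   Context: Let $R(x,y)=\frac{x+1}{y+1}\vee\frac{y+1}{x+1}$, $P(x,y)=\frac{y+1}{2(x+1)}\mathbb 1_{x\ge y}+\big(1-\frac{x+1}{2(y+1)}\big)\mathbb 1_{x<y}$, $R_X=RP$, $R_Y=R(1-P)$. Under $\mathbb Q$, $(\xi_t)_{t\ge0}$ is a Markov process in $\mathbb R^2$ with $\xi_0=0$ which, in state $z$, jumps at rate $2R(z)$; a jump from $z$ is $(\mathbbm e,0)$ with probability $P(z)$ and $(0,\mathbbm e)$ otherwise, with $\mathbbm e$ an independent Exp(1) variable. Write $\xi^T(s)=\xi(sT)/T$; conditioning on $\xi^T(a)=z$ means considering the process from time $aT$ onwards started at $Tz$. $\|(x_1,y_1)-(x_2,y_2)\|=\max\{|x_1-x_2|,|y_1-y_2|\}$. $E$ is the set of non-decreasing càdlàg $f:[0,1]\to\mathbb R$ with $f(0)=0$,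 with Lévy metric $d(f,g)=\inf\{r>0:f(x-r)-r<g(x)<f(x+r)+r\ \forall x\in[-r,1+r]\}$ ($f(x)=f(0)$ for $x<0$, $f(1)$ for $x>1$), and on $E^2$ the max of the coordinate distances. For a set $F\subset E^2$ and interval $I$, a function $h$ on $I$ satisfies $h\in F|_I$ iff some $g\in F$ agrees with $h$ on $I$. $G_{M,T}=\{f\in E: s/M-2T^{-2/3}\le f(s)\le M(s+2T^{-2/3})\ \forall s\in[0,1]\}$. $\Delta_n(f,g)=\max\{\|f(i/n)-g(i/n)\|:i=0,\dots,n\}$. $\Gamma_{M,T}(f,n)=B_{\Delta_n}(f,1/n^2)\cap B_d(f,1/n)\cap G_{M,T}^2$ (open balls). $I_j=[j/n,(j+1)/n]$. For a non-empty interval $I\subset[0,1]$ with infimum $I^-$, supremum $I^+$ and length $|I|$, $F\subset E^2$ and $T\ge1$: $R^-_X(I,F,T)=\inf\{R_X(Tg(s)):s\in I,g\in F\}$, $R^+_X(I,F,T)=\sup\{\cdots\}$, similarly $R^\pm_Y$; $x^-(s,F)=\inf\{g_X(s):g\in F\}$, $x^+(s,F)=\sup\{g_X(s):g\in F\}$, similarly $y^\pm$. "$X-$ case": $2R^-_X(I,F,T)|I|>x^+(I^+,F)-x^-(I^-,F)$; "$X+$ case": $x^-(I^+,F)-x^+(I^-,F)>2R^+_X(I,F,T)|I|$. Then $\mathcal E^+_X(I,F,T)=(\sqrt{2R^-_X(I,F,T)|I|}-\sqrt{x^+(I^+,F)-x^-(I^-,F)})^2$ in the $X-$ case, $=(\sqrt{2R^+_X(I,F,T)|I|}-\sqrt{x^-(I^+,F)-x^+(I^-,F)})^2$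 in the $X+$ case, and $0$ otherwise; $\mathcal E^+_Y$ is defined identically with $R^\pm_Y$, $y^\pm$ in place of $R^\pm_X$, $x^\pm$. *)

theory Defs
  imports "HOL-Probability.Probability"
begin

definition rateR :: "real \<times> real \<Rightarrow> real" where
  "rateR z = max ((fst z + 1) / (snd z + 1)) ((snd z + 1) / (fst z + 1))"

definition dirP :: "real \<times> real \<Rightarrow> real" where
  "dirP z = (if fst z \<ge> snd z then (snd z + 1) / (2 * (fst z + 1))
             else 1 - (fst z + 1) / (2 * (snd z + 1)))"

definition rateRX :: "real \<times> real \<Rightarrow> real" where
  "rateRX z = rateR z * dirP z"

definition rateRY :: "real \<times> real \<Rightarrow> real" where
  "rateRY z = rateR z * (1 - dirP z)"

text \<open>Elements of E are stored with the canonical extension used in the Levy metric: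
  f x = f 0 = 0 for x \<le> 0 and f x = f 1 for x \<ge> 1.\<close>

definition E_space :: "(real \<Rightarrow> real) set" where
  "E_space = {f. mono f \<and> (\<forall>x. continuous (at_right x) f) \<and> (\<forall>x. \<exists>l. (f \<longlongrightarrow> l) (at_left x))
     \<and> f 0 = 0 \<and> (\<forall>x\<le>0. f x = 0) \<and> (\<forall>x\<ge>1. f x = f 1)}"

type_synonym path2 = "(real \<Rightarrow> real) \<times> (real \<Rightarrow> real)"

definition E2 :: "path2 set" where
  "E2 = E_space \<times> E_space"

definition evalp :: "path2 \<Rightarrow> real \<Rightarrow> real \<times> real" where
  "evalp g s = (fst g s, snd g s)"

definition levy_d :: "(real \<Rightarrow> real) \<Rightarrow> (real \<Rightarrow> real) \<Rightarrow> real" where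
  "levy_d f g = Inf {r. r > 0 \<and> (\<forall>x\<in>{-r..1+r}. f (x - r) - r < g x \<and> g x < f (x + r) + r)}"

definition levy_d2 :: "path2 \<Rightarrow> path2 \<Rightarrow> real" where
  "levy_d2 f g = max (levy_d (fst f) (fst g)) (levy_d (snd f) (snd g))"

definition supnorm2 :: "real \<times> real \<Rightarrow> real" where
  "supnorm2 z = max \<bar>fst z\<bar> \<bar>snd z\<bar>"

definition G_set :: "real \<Rightarrow> real \<Rightarrow> (real \<Rightarrow> real) set" where
  "G_set M T = {f \<in> E_space. \<forall>s\<in>{0..1}.
      s / M - 2 * T powr (-2/3) \<le> f s \<and> f s \<le> M * (s + 2 * T powr (-2/3))}"

definition Delta_n :: "nat \<Rightarrow> path2 \<Rightarrow> path2 \<Rightarrow> real" where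
  "Delta_n n f g = Max ((\<lambda>i. supnorm2 (evalp f (real i / real n) - evalp g (real i / real n))) ` {0..n})"

definition Gamma :: "real \<Rightarrow> real \<Rightarrow> path2 \<Rightarrow> nat \<Rightarrow> path2 set" where
  "Gamma M T f n = {g \<in> E2. Delta_n n f g < 1 / (real n)^2 \<and> levy_d2 f g < 1 / real n}
                   \<inter> (G_set M T \<times> G_set M T)"

definition Ij :: "nat \<Rightarrow> nat \<Rightarrow> real set" where
  "Ij n j = {real j / real n .. real (j + 1) / real n}"

definition restr_in :: "(real \<Rightarrow> real \<times> real) \<Rightarrow> path2 set \<Rightarrow> real set \<Rightarrow> bool" where
  "restr_in h F I = (\<exists>g\<in>F. \<forall>s\<in>I. evalp g s = h s)"

definition Rminus :: "(real \<times> real \<Rightarrow> real) \<Rightarrow> real set \<Rightarrow> path2 set \<Rightarrow> real \<Rightarrow> real" where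
  "Rminus Rf I F T = Inf {Rf (T *\<^sub>R evalp g s) | s g. s \<in> I \<and> g \<in> F}"

definition Rplus :: "(real \<times> real \<Rightarrow> real) \<Rightarrow> real set \<Rightarrow> path2 set \<Rightarrow> real \<Rightarrow> real" where
  "Rplus Rf I F T = Sup {Rf (T *\<^sub>R evalp g s) | s g. s \<in> I \<and> g \<in> F}"

definition cminus :: "(path2 \<Rightarrow> real \<Rightarrow> real) \<Rightarrow> real \<Rightarrow> path2 set \<Rightarrow> real" where
  "cminus c s F = Inf {c g s | g. g \<in> F}"

definition cplus :: "(path2 \<Rightarrow> real \<Rightarrow> real) \<Rightarrow> real \<Rightarrow> path2 set \<Rightarrow> real" where
  "cplus c s F = Sup {c g s | g. g \<in> F}"

text \<open>Generic version of the functional; X: (rateRX, fst), Y: (rateRY, snd).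
  The "minus" case is checked first (the two cases are exclusive in the paper's setting).\<close>
definition calE :: "(real \<times> real \<Rightarrow> real) \<Rightarrow> (path2 \<Rightarrow> real \<Rightarrow> real) \<Rightarrow> real set \<Rightarrow> path2 set \<Rightarrow> real \<Rightarrow> real" where
  "calE Rf c I F T =
    (let Im = Inf I; Ip = Sup I; L = Ip - Im in
     if 2 * Rminus Rf I F T * L > cplus c Ip F - cminus c Im F
       then (sqrt (2 * Rminus Rf I F T * L) - sqrt (cplus c Ip F - cminus c Im F))^2
     else if cminus c Ip F - cplus c Im F > 2 * Rplus Rf I F T * L
       then (sqrt (2 * Rplus Rf I F T * L) - sqrt (cminus c Ip F - cplus c Im F))^2
     else 0)"

definition calE_X :: "real set \<Rightarrow> path2 set \<Rightarrow> real \<Rightarrow> real" where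
  "calE_X I F T = calE rateRX fst I F T"

definition calE_Y :: "real set \<Rightarrow> path2 set \<Rightarrow> real \<Rightarrow> real" where
  "calE_Y I F T = calE rateRY snd I F T"

text \<open>Randomness: an i.i.d. sequence of triples ((h, e), u) with h, e ~ Exp(1) and u ~ Unif[0,1]:
  h drives the holding time, e the jump size, u the jump direction.\<close>

type_synonym omega = "nat \<Rightarrow> (real \<times> real) \<times> real"

definition jump_meas :: "((real \<times> real) \<times> real) measure" where
  "jump_meas = (density lborel (exponential_density 1) \<Otimes>\<^sub>M density lborel (exponential_density 1))
                \<Otimes>\<^sub>M uniform_measure lborel {0..1}"

definition Q_meas :: "omega measure" where
  "Q_meas = (\<Pi>\<^sub>M k\<in>(UNIV :: nat set). jump_meas)"

primrec chain :: "real \<times> real \<Rightarrow> omega \<Rightarrow> nat \<Rightarrow> real \<times> real" where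
  "chain z0 \<omega> 0 = z0"
| "chain z0 \<omega> (Suc k) =
     (let z = chain z0 \<omega> k; e = snd (fst (\<omega> k)); u = snd (\<omega> k) in
      if u < dirP z then z + (e, 0) else z + (0, e))"

definition hold :: "real \<times> real \<Rightarrow> omega \<Rightarrow> nat \<Rightarrow> real" where
  "hold z0 \<omega> k = fst (fst (\<omega> k)) / (2 * rateR (chain z0 \<omega> k))"

text \<open>Position at time t of the process started at z0 at time 0 (jump rate 2R, holding time
  Exp(1)/(2R)); a state with non-positive rate is absorbing.\<close>
definition proc :: "real \<times> real \<Rightarrow> omega \<Rightarrow> real \<Rightarrow> real \<times> real" where
  "proc z0 \<omega> t = chain z0 \<omega>
     (LEAST k. rateR (chain z0 \<omega> k) \<le> 0 \<or> t < (\<Sum>j\<le>k. hold z0 \<omega> j))"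

definition outer_prob :: "'a measure \<Rightarrow> 'a set \<Rightarrow> real" where
  "outer_prob M A = Inf (measure M ` {B \<in> sets M. A \<subseteq> B})"

end

(*
  Exponential change of measure. Tilt the horizontal and vertical jump sizes by parameters
  theta < 1 that are constant on each block I_j of the rescaled time. The exponential of the
  tilted displacement minus the compensator, which accrues at rate
  2 R_X theta_X / (1 - theta_X) + 2 R_Y theta_Y / (1 - theta_Y), has expectation at most 1 along
  the jump chain, so Markov's inequality bounds the probability that it exceeds e^c by e^-c.
  While the rescaled path stays in the tube Gamma, its increments and rates over I_j are confined
  by x^+-, y^+- and R^+-, and choosing theta near the maximiser 1 - sqrt (2 R |I|) / sqrt Delta of
  theta Delta - 2 R |I| theta / (1 - theta) makes the exponent at least T (E_X^+ + E_Y^+) - epsilon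
  on every block. Paths whose jumps never leave the tube form a null set, since the Exp(1) jump
  sizes sum to infinity almost surely.
*)
theory Submission
  imports Defs
begin

lemma borel_measurable_rateR [measurable]: "rateR \<in> borel_measurable borel"
proof -
  have "rateR \<in> borel_measurable (borel \<Otimes>\<^sub>M borel)"
    unfolding rateR_def by measurable
  then show ?thesis by (simp add: borel_prod)
qed

lemma borel_measurable_dirP [measurable]: "dirP \<in> borel_measurable borel"
proof -
  have "dirP \<in> borel_measurable (borel \<Otimes>\<^sub>M borel)"
    unfolding dirP_def by measurable
  then show ?thesis by (simp add: borel_prod)
qed

lemma borel_measurable_rateRX [measurable]: "rateRX \<in> borel_measurable borel"
  unfolding rateRX_def[abs_def] by measurable

lemma borel_measurable_rateRY [measurable]: "rateRY \<in> borel_measurable borel"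
  unfolding rateRY_def[abs_def] by measurable

lemma rateR_ge_1: "0 \<le> fst z \<Longrightarrow> 0 \<le> snd z \<Longrightarrow> 1 \<le> rateR z"
  unfolding rateR_def by (auto simp: le_max_iff_disj divide_simps)

lemma rateR_le_sum:
  assumes "0 \<le> fst z" "0 \<le> snd z"
  shows "rateR z \<le> fst z + snd z + 1"
proof -
  have "(fst z + 1) * 1 \<le> (fst z + 1) * (snd z + 1)" "(snd z + 1) * 1 \<le> (snd z + 1) * (fst z + 1)"
    using assms by (intro mult_left_mono; simp)+
  then have "(fst z + 1) / (snd z + 1) \<le> fst z + 1" "(snd z + 1) / (fst z + 1) \<le> snd z + 1"
    using assms by (simp_all add: divide_le_eq)
  then show ?thesis
    unfolding rateR_def using assms by simp
qed

lemma dirP_bounds: "0 \<le> fst z \<Longrightarrow> 0 \<le> snd z \<Longrightarrow> 0 \<le> dirP z \<and> dirP z \<le> 1"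
  unfolding dirP_def by (auto simp: divide_simps)

lemma rate_times_bounds:
  assumes "0 \<le> fst z" "0 \<le> snd z" "0 \<le> p" "p \<le> 1"
  shows "0 \<le> rateR z * p \<and> rateR z * p \<le> fst z + snd z + 1"
proof -
  have "rateR z * p \<le> rateR z"
    using rateR_ge_1[OF assms(1,2)] assms(3,4) by (simp add: mult_left_le)
  moreover have "0 \<le> rateR z * p"
    using rateR_ge_1[OF assms(1,2)] assms(3) by simp
  ultimately show ?thesis
    using rateR_le_sum[OF assms(1,2)] by linarith
qed

lemma rateRX_bounds: "0 \<le> fst z \<Longrightarrow> 0 \<le> snd z \<Longrightarrow> 0 \<le> rateRX z \<and> rateRX z \<le> fst z + snd z + 1"
  unfolding rateRX_def by (intro rate_times_bounds) (use dirP_bounds in auto)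

lemma rateRY_bounds: "0 \<le> fst z \<Longrightarrow> 0 \<le> snd z \<Longrightarrow> 0 \<le> rateRY z \<and> rateRY z \<le> fst z + snd z + 1"
  unfolding rateRY_def by (intro rate_times_bounds) (use dirP_bounds in auto)

section \<open>The jump distribution and the path space\<close>

abbreviation exp_meas :: "real measure" where
  "exp_meas \<equiv> density lborel (\<lambda>x. ennreal (exponential_density 1 x))"

abbreviation unif_meas :: "real measure" where
  "unif_meas \<equiv> uniform_measure lborel {0..1}"

lemma prob_space_exp_meas: "prob_space exp_meas"
  by (rule prob_space_exponential_density) simp

lemma prob_space_unif_meas: "prob_space unif_meas"
  by (intro prob_space_uniform_measure) auto

lemma jump_meas_eq: "jump_meas = (exp_meas \<Otimes>\<^sub>M exp_meas) \<Otimes>\<^sub>M unif_meas"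
  unfolding jump_meas_def ..

lemma prob_space_jump_meas: "prob_space jump_meas"
  unfolding jump_meas_eq by (intro prob_space_pair prob_space_exp_meas prob_space_unif_meas)

lemma sets_jump_meas: "sets jump_meas = sets ((borel \<Otimes>\<^sub>M borel) \<Otimes>\<^sub>M (borel :: real measure))"
  unfolding jump_meas_def by (intro sets_pair_measure_cong) auto

interpretation Q: sequence_space jump_meas
  by (simp add: sequence_space_def product_prob_space_def product_prob_space_axioms_def
      product_sigma_finite_def prob_space_imp_sigma_finite prob_space_jump_meas)

lemma prob_space_Q_meas: "prob_space Q_meas"
  unfolding Q_meas_def by (rule Q.P.prob_space_axioms)

lemma measurable_Q_meas_jump [measurable]:
  "(\<lambda>\<omega>. fst (fst (\<omega> k))) \<in> borel_measurable Q_meas"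
  "(\<lambda>\<omega>. snd (fst (\<omega> k))) \<in> borel_measurable Q_meas"
  "(\<lambda>\<omega>. snd (\<omega> k)) \<in> borel_measurable Q_meas"
proof -
  have "(\<lambda>\<omega>. \<omega> k) \<in> Q_meas \<rightarrow>\<^sub>M jump_meas"
    unfolding Q_meas_def by (rule measurable_component_singleton) simp
  then have [measurable]: "(\<lambda>\<omega>. \<omega> k) \<in> Q_meas \<rightarrow>\<^sub>M (borel \<Otimes>\<^sub>M borel) \<Otimes>\<^sub>M borel"
    using measurable_cong_sets[OF refl sets_jump_meas] by blast
  show "(\<lambda>\<omega>. fst (fst (\<omega> k))) \<in> borel_measurable Q_meas"
    "(\<lambda>\<omega>. snd (fst (\<omega> k))) \<in> borel_measurable Q_meas"
    "(\<lambda>\<omega>. snd (\<omega> k)) \<in> borel_measurable Q_meas"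
    by measurable
qed

lemma nn_integral_Q_meas_case_nat:
  assumes [measurable]: "u \<in> borel_measurable Q_meas"
  shows "(\<integral>\<^sup>+\<omega>. u \<omega> \<partial>Q_meas) = (\<integral>\<^sup>+s. \<integral>\<^sup>+\<omega>. u (case_nat s \<omega>) \<partial>Q_meas \<partial>jump_meas)"
proof -
  have cn: "(\<lambda>(s, \<omega>). case_nat s \<omega>) \<in> jump_meas \<Otimes>\<^sub>M Q_meas \<rightarrow>\<^sub>M Q_meas"
    unfolding Q_meas_def by measurable
  interpret sigma_finite_measure Q_meas
    by (rule prob_space_imp_sigma_finite[OF prob_space_Q_meas])
  have "(\<integral>\<^sup>+\<omega>. u \<omega> \<partial>Q_meas) = (\<integral>\<^sup>+\<omega>. u \<omega> \<partial>distr (jump_meas \<Otimes>\<^sub>M Q_meas) Q_meas (\<lambda>(s, \<omega>). case_nat s \<omega>))"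
    using Q.PiM_iter by (simp add: Q_meas_def)
  also have "\<dots> = (\<integral>\<^sup>+x. u (case_prod case_nat x) \<partial>(jump_meas \<Otimes>\<^sub>M Q_meas))"
    by (rule nn_integral_distr[OF cn]) simp
  also have "\<dots> = (\<integral>\<^sup>+s. \<integral>\<^sup>+\<omega>. u (case_nat s \<omega>) \<partial>Q_meas \<partial>jump_meas)"
    using measurable_compose[OF cn assms] by (subst nn_integral_fst[symmetric]) simp_all
  finally show ?thesis .
qed

lemma nn_integral_unif_meas_threshold:
  fixes p A B :: real
  assumes "0 \<le> p" "p \<le> 1" "0 \<le> A" "0 \<le> B"
  shows "(\<integral>\<^sup>+u. ennreal (if u < p then A else B) \<partial>unif_meas) = ennreal (p * A + (1 - p) * B)"
proof -
  have "(\<integral>\<^sup>+u. ennreal (if u < p then A else B) \<partial>unif_meas)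
      = (\<integral>\<^sup>+u. ennreal (if u < p then A else B) * indicator {0..1} u \<partial>lborel)"
    by (subst nn_integral_uniform_measure) (auto simp: divide_ennreal_def)
  also have "\<dots> = (\<integral>\<^sup>+u. ennreal A * indicator {0..<p} u + ennreal B * indicator {p..1} u \<partial>lborel)"
    using assms by (intro nn_integral_cong) (auto split: split_indicator)
  also have "\<dots> = ennreal A * emeasure lborel {0..<p} + ennreal B * emeasure lborel {p..1}"
    by (subst nn_integral_add) (auto simp: nn_integral_cmult_indicator)
  also have "\<dots> = ennreal (p * A + (1 - p) * B)"
    using assms by (simp add: ennreal_mult[symmetric] ennreal_plus[symmetric] mult.commute del: ennreal_plus)
  finally show ?thesis .
qed

lemma nn_integral_exp_meas_exp:
  fixes c :: real
  assumes "c < 1"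
  shows "(\<integral>\<^sup>+e. ennreal (exp (c * max 0 e)) \<partial>exp_meas) = ennreal (1 / (1 - c))"
proof -
  have "(\<integral>\<^sup>+e. ennreal (exp (c * max 0 e)) \<partial>exp_meas)
     = (\<integral>\<^sup>+e. ennreal (exponential_density 1 e) * ennreal (exp (c * max 0 e)) \<partial>lborel)"
    by (subst nn_integral_density) auto
  also have "\<dots> = (\<integral>\<^sup>+e. ennreal (exp ((c - 1) * e)) * indicator {0..} e \<partial>lborel)"
    by (intro nn_integral_cong)
       (auto simp: exponential_density_def ennreal_mult'[symmetric] mult_exp_exp algebra_simps split: split_indicator)
  also have "\<dots> = 0 - (exp ((c - 1) * 0) * (1 / (c - 1)))"
  proof (rule nn_integral_FTC_atLeast)
    show "((\<lambda>x. exp ((c - 1) * x) * (1 / (c - 1))) has_real_derivative exp ((c - 1) * x)) (at x)" for x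
      using assms by (auto intro!: derivative_eq_intros)
    have "filterlim (\<lambda>x. (c - 1) * x) at_bot at_top"
      using assms by (intro filterlim_tendsto_neg_mult_at_bot[OF tendsto_const _ filterlim_ident]) simp
    then show "((\<lambda>x. exp ((c - 1) * x) * (1 / (c - 1))) \<longlongrightarrow> 0) at_top"
      by (intro tendsto_mult_left_zero filterlim_compose[OF exp_at_bot])
  qed auto
  finally show ?thesis using assms by (simp add: divide_simps)
qed

lemma nn_integral_jump_meas:
  assumes u: "u \<in> borel_measurable ((borel \<Otimes>\<^sub>M borel) \<Otimes>\<^sub>M borel)"
  shows "(\<integral>\<^sup>+s. u s \<partial>jump_meas) = (\<integral>\<^sup>+h. \<integral>\<^sup>+e. \<integral>\<^sup>+v. u ((h, e), v) \<partial>unif_meas \<partial>exp_meas \<partial>exp_meas)"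
proof -
  interpret E: sigma_finite_measure exp_meas
    by (rule prob_space_imp_sigma_finite[OF prob_space_exp_meas])
  interpret U: sigma_finite_measure unif_meas
    by (rule prob_space_imp_sigma_finite[OF prob_space_unif_meas])
  have "u \<in> borel_measurable ((exp_meas \<Otimes>\<^sub>M exp_meas) \<Otimes>\<^sub>M unif_meas)"
    using u measurable_cong_sets[OF sets_jump_meas refl] unfolding jump_meas_eq by blast
  then have "(\<integral>\<^sup>+s. u s \<partial>jump_meas) = (\<integral>\<^sup>+x. \<integral>\<^sup>+v. u (x, v) \<partial>unif_meas \<partial>(exp_meas \<Otimes>\<^sub>M exp_meas))"
    and "(\<lambda>x. \<integral>\<^sup>+v. u (x, v) \<partial>unif_meas) \<in> borel_measurable (exp_meas \<Otimes>\<^sub>M exp_meas)"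
    unfolding jump_meas_eq by (simp_all add: U.nn_integral_fst[symmetric] U.borel_measurable_nn_integral_fst)
  then show ?thesis
    by (simp add: E.nn_integral_fst[symmetric])
qed

lemma nn_integral_exp_meas_mixture:
  fixes p a b c :: real
  assumes "0 \<le> p" "p \<le> 1" "a < 1" "b < 1"
  shows "(\<integral>\<^sup>+e. ennreal (p * exp (a * max 0 e - c) + (1 - p) * exp (b * max 0 e - c)) \<partial>exp_meas)
    = ennreal (exp (- c) * (p / (1 - a) + (1 - p) / (1 - b)))"
proof -
  have "(\<integral>\<^sup>+e. ennreal (p * exp (a * max 0 e - c) + (1 - p) * exp (b * max 0 e - c)) \<partial>exp_meas)
     = (\<integral>\<^sup>+e. ennreal (p * exp (- c)) * ennreal (exp (a * max 0 e))
              + ennreal ((1 - p) * exp (- c)) * ennreal (exp (b * max 0 e)) \<partial>exp_meas)"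
    using assms by (intro nn_integral_cong)
      (simp add: ennreal_mult''[symmetric] ennreal_plus[symmetric] exp_diff exp_minus field_simps del: ennreal_plus)
  also have "\<dots> = ennreal (p * exp (- c)) * ennreal (1 / (1 - a)) + ennreal ((1 - p) * exp (- c)) * ennreal (1 / (1 - b))"
    using assms by (simp add: nn_integral_add nn_integral_cmult nn_integral_exp_meas_exp)
  also have "\<dots> = ennreal (exp (- c) * (p / (1 - a) + (1 - p) / (1 - b)))"
    using assms by (simp add: ennreal_mult''[symmetric] ennreal_plus[symmetric] field_simps del: ennreal_plus)
  finally show ?thesis .
qed

lemma nn_integral_exp_meas_density:
  assumes [measurable]: "C \<in> borel_measurable borel" "G \<in> borel_measurable borel"
  shows "(\<integral>\<^sup>+h. ennreal (exp (- C h) * G h) \<partial>exp_meas) = (\<integral>\<^sup>+h. ennreal (exp (- h - C h) * G h) * indicator {0..} h \<partial>lborel)"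
proof -
  have "ennreal (exponential_density 1 h) * ennreal (exp (- C h) * G h) = ennreal (exp (- h - C h) * G h) * indicator {0..} h"
    for h
  proof -
    have "ennreal (exponential_density 1 h) * ennreal (exp (- C h) * G h)
        = ennreal (exponential_density 1 h * (exp (- C h) * G h))"
      by (simp add: ennreal_mult' exponential_density_nonneg)
    also have "exponential_density 1 h * (exp (- C h) * G h) = exp (- h - C h) * G h * indicator {0..} h"
      by (simp add: exponential_density_def exp_diff exp_minus divide_inverse split: split_indicator)
    finally show ?thesis
      by (simp add: ennreal_mult'' ennreal_indicator)
  qed
  then show ?thesis
    by (subst nn_integral_density) auto
qed

lemma AE_exp_meas_pos: "AE x in exp_meas. 0 < x"
proof -
  have "AE x in lborel. x \<noteq> (0::real)" by (rule AE_lborel_singleton)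
  then have "AE x in lborel. 0 < ennreal (exponential_density 1 x) \<longrightarrow> 0 < x"
    by eventually_elim (auto simp: exponential_density_def)
  then show ?thesis by (subst AE_density) auto
qed

lemma AE_jump_meas_pos: "AE s in jump_meas. 0 < fst (fst s) \<and> 0 < snd (fst s)"
proof -
  interpret EE: pair_sigma_finite exp_meas exp_meas
    by (simp add: pair_sigma_finite_def prob_space_imp_sigma_finite prob_space_exp_meas)
  interpret EU: pair_sigma_finite "exp_meas \<Otimes>\<^sub>M exp_meas" unif_meas
    by (simp add: pair_sigma_finite_def prob_space_imp_sigma_finite prob_space_unif_meas
        prob_space_pair prob_space_exp_meas)
  have "AE x in exp_meas \<Otimes>\<^sub>M exp_meas. 0 < fst x \<and> 0 < snd x"
    by (rule EE.AE_pair_measure) (measurable, use AE_exp_meas_pos in \<open>auto elim: AE_mp\<close>)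
  then show ?thesis
    unfolding jump_meas_eq by (intro EU.AE_pair_measure) (measurable, auto elim: AE_mp)
qed

lemma AE_Q_meas_jumps_pos: "AE \<omega> in Q_meas. \<forall>k. 0 < fst (fst (\<omega> k)) \<and> 0 < snd (fst (\<omega> k))"
proof (subst AE_all_countable, intro allI)
  show "AE \<omega> in Q_meas. 0 < fst (fst (\<omega> k)) \<and> 0 < snd (fst (\<omega> k))" for k
    unfolding Q_meas_def by (rule AE_PiM_component[OF prob_space_jump_meas _ AE_jump_meas_pos]) simp
qed

lemma nn_integral_jump_meas_exp_neg_size:
  "(\<integral>\<^sup>+s. ennreal (exp (- max 0 (snd (fst s)))) \<partial>jump_meas) = ennreal (1 / 2)"
  using nn_integral_exp_meas_exp[of "-1"] prob_space.emeasure_space_1[OF prob_space_exp_meas]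
    prob_space.emeasure_space_1[OF prob_space_unif_meas]
  by (subst nn_integral_jump_meas) (simp_all add: nn_integral_const)

lemma nn_integral_Q_meas_exp_neg_sizes:
  "(\<integral>\<^sup>+\<omega>. ennreal (exp (- (\<Sum>m<k. max 0 (snd (fst (\<omega> m)))))) \<partial>Q_meas) = ennreal ((1 / 2) ^ k)"
proof (induction k)
  case 0
  show ?case using prob_space.emeasure_space_1[OF prob_space_Q_meas] by simp
next
  case (Suc k)
  have split: "exp (- (\<Sum>m<Suc k. max 0 (snd (fst (case_nat s \<omega> m)))))
      = exp (- max 0 (snd (fst s))) * exp (- (\<Sum>m<k. max 0 (snd (fst (\<omega> m)))))"
    for s :: "(real \<times> real) \<times> real" and \<omega> :: omega
    unfolding sum.lessThan_Suc_shift by (simp add: exp_add[symmetric])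
  have meas: "(\<lambda>\<omega>. ennreal (exp (- (\<Sum>m<k. max 0 (snd (fst (\<omega> m))))))) \<in> borel_measurable Q_meas"
    by measurable
  have "(\<integral>\<^sup>+\<omega>. ennreal (exp (- (\<Sum>m<Suc k. max 0 (snd (fst (\<omega> m)))))) \<partial>Q_meas)
      = (\<integral>\<^sup>+s. \<integral>\<^sup>+\<omega>. ennreal (exp (- max 0 (snd (fst s)))) * ennreal (exp (- (\<Sum>m<k. max 0 (snd (fst (\<omega> m)))))) \<partial>Q_meas \<partial>jump_meas)"
    by (subst nn_integral_Q_meas_case_nat) (measurable, simp only: split ennreal_mult exp_ge_zero)
  also have "\<dots> = (\<integral>\<^sup>+s. ennreal (exp (- max 0 (snd (fst s)))) * ennreal ((1 / 2) ^ k) \<partial>jump_meas)"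
    using meas by (simp add: nn_integral_cmult Suc.IH)
  also have "\<dots> = ennreal (1 / 2) * ennreal ((1 / 2) ^ k)"
    unfolding jump_meas_eq
    by (subst nn_integral_multc) (measurable, simp add: nn_integral_jump_meas_exp_neg_size[unfolded jump_meas_eq])
  also have "\<dots> = ennreal ((1 / 2) ^ Suc k)"
    by (subst ennreal_mult[symmetric]) auto
  finally show ?case .
qed

lemma emeasure_bounded_jump_sizes_eq_0:
  "emeasure Q_meas {\<omega> \<in> space Q_meas. \<forall>k. (\<Sum>m<k. max 0 (snd (fst (\<omega> m)))) \<le> D} = 0"
  (is "emeasure Q_meas ?Z = 0")
proof -
  interpret prob_space Q_meas by (rule prob_space_Q_meas)
  have "emeasure Q_meas ?Z \<le> ennreal (exp D * (1 / 2) ^ k)" for k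
  proof -
    have "emeasure Q_meas ?Z \<le> (\<integral>\<^sup>+\<omega>. ennreal (exp D) * ennreal (exp (- (\<Sum>m<k. max 0 (snd (fst (\<omega> m)))))) \<partial>Q_meas)"
    proof (subst nn_integral_indicator[symmetric], measurable, intro nn_integral_mono)
      fix \<omega>
      have "\<omega> \<in> ?Z \<Longrightarrow> 1 \<le> exp D * exp (- (\<Sum>m<k. max 0 (snd (fst (\<omega> m)))))"
        by (simp add: exp_minus field_simps)
      then show "indicator ?Z \<omega> \<le> ennreal (exp D) * ennreal (exp (- (\<Sum>m<k. max 0 (snd (fst (\<omega> m))))))"
        by (auto simp: ennreal_mult'[symmetric] split: split_indicator)
    qed
    also have "\<dots> = ennreal (exp D * (1 / 2) ^ k)"
      by (subst nn_integral_cmult) (measurable, simp add: nn_integral_Q_meas_exp_neg_sizes ennreal_mult'[symmetric])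
    finally show ?thesis .
  qed
  then have "measure Q_meas ?Z \<le> exp D * (1 / 2) ^ k" for k
    by (simp add: emeasure_eq_measure)
  moreover have lim: "(\<lambda>k. exp D * (1 / 2) ^ k) \<longlonglongrightarrow> 0"
    by (intro tendsto_mult_right_zero LIMSEQ_power_zero) auto
  ultimately have "measure Q_meas ?Z \<le> 0"
    by (intro LIMSEQ_le_const[OF lim]) auto
  then show ?thesis by (simp add: emeasure_eq_measure measure_nonneg antisym)
qed

section \<open>Exponential tilting of the jump chain\<close>

definition overlap :: "real \<Rightarrow> real \<Rightarrow> real \<Rightarrow> real \<Rightarrow> real" where
  "overlap a b \<alpha> \<beta> = max 0 (min b \<beta> - max a \<alpha>)"

lemma overlap_nonneg: "0 \<le> overlap a b \<alpha> \<beta>"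
  by (simp add: overlap_def)

lemma overlap_same: "overlap a a \<alpha> \<beta> = 0"
  by (simp add: overlap_def)

lemma overlap_add: "a \<le> b \<Longrightarrow> b \<le> c \<Longrightarrow> \<alpha> \<le> \<beta> \<Longrightarrow> overlap a b \<alpha> \<beta> + overlap b c \<alpha> \<beta> = overlap a c \<alpha> \<beta>"
  unfolding overlap_def by linarith

lemma overlap_pos_obtain:
  assumes "0 < overlap a b \<alpha> \<beta>"
  obtains t where "a \<le> t" "t < b" "\<alpha> \<le> t" "t \<le> \<beta>"
  using assms unfolding overlap_def
  by (intro that[of "(max a \<alpha> + min b \<beta>) / 2"]) auto

lemma sum_overlap_telescope:
  assumes "mono S" "\<alpha> \<le> \<beta>"
  shows "(\<Sum>m<k. overlap (S m) (S (Suc m)) \<alpha> \<beta>) = overlap (S 0) (S k) \<alpha> \<beta>"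
proof (induction k)
  case 0
  then show ?case by (simp add: overlap_same)
next
  case (Suc k)
  have "S 0 \<le> S k" "S k \<le> S (Suc k)" using assms(1) by (auto simp: mono_def)
  then show ?case using Suc overlap_add[of "S 0" "S k" "S (Suc k)" \<alpha> \<beta>] assms(2) by simp
qed

lemma has_real_derivative_overlap:
  assumes "b \<noteq> \<beta>" "b \<noteq> max a \<alpha>"
  shows "((\<lambda>b. overlap a b \<alpha> \<beta>) has_real_derivative (if max a \<alpha> < b \<and> b < \<beta> then 1 else 0)) (at b)"
proof -
  consider "\<beta> < b" | "b < \<beta>" "b < max a \<alpha>" | "max a \<alpha> < b" "b < \<beta>"
    using assms by linarith
  then show ?thesis
  proof cases
    case 1
    have "((\<lambda>b. max 0 (\<beta> - max a \<alpha>)) has_real_derivative 0) (at b)" by simp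
    then have "((\<lambda>b. overlap a b \<alpha> \<beta>) has_real_derivative 0) (at b)"
      by (rule has_field_derivative_transform_within_open[where S="{\<beta><..}"])
         (use 1 in \<open>auto simp: overlap_def\<close>)
    moreover have c: "\<not> (max a \<alpha> < b \<and> b < \<beta>)" using 1 by linarith
    ultimately show ?thesis by (subst if_not_P[OF c])
  next
    case 2
    have "((\<lambda>b. 0) has_real_derivative 0) (at b)" by simp
    then have "((\<lambda>b. overlap a b \<alpha> \<beta>) has_real_derivative 0) (at b)"
      by (rule has_field_derivative_transform_within_open[where S="{..<min \<beta> (max a \<alpha>)}"])
         (use 2 in \<open>auto simp: overlap_def\<close>)
    moreover have c: "\<not> (max a \<alpha> < b \<and> b < \<beta>)" using 2 by linarith
    ultimately show ?thesis by (subst if_not_P[OF c])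
  next
    case 3
    have "((\<lambda>b. b - max a \<alpha>) has_real_derivative 1) (at b)"
      by (auto intro!: derivative_eq_intros)
    then have "((\<lambda>b. overlap a b \<alpha> \<beta>) has_real_derivative 1) (at b)"
      by (rule has_field_derivative_transform_within_open[where S="{max a \<alpha><..<\<beta>}"])
         (use 3 in \<open>auto simp: overlap_def\<close>)
    moreover have c: "(max a \<alpha> < b \<and> b < \<beta>)" using 3 by linarith
    ultimately show ?thesis by (subst if_P[OF c])
  qed
qed

lemma continuous_on_overlap [continuous_intros]:
  "continuous_on S f \<Longrightarrow> continuous_on S (\<lambda>x. overlap a (f x) \<alpha> \<beta>)"
  unfolding overlap_def by (intro continuous_intros)

lemma borel_measurable_overlap [measurable (raw)]:
  assumes [measurable]: "f \<in> borel_measurable M" "g \<in> borel_measurable M"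
  shows "(\<lambda>x. overlap (f x) (g x) \<alpha> \<beta>) \<in> borel_measurable M"
  unfolding overlap_def by measurable

lemma nn_integral_atLeast_le:
  fixes f :: "real \<Rightarrow> ennreal"
  assumes [measurable]: "f \<in> borel_measurable borel"
    and le: "\<And>b. 0 \<le> b \<Longrightarrow> (\<integral>\<^sup>+x. f x * indicator {0..b} x \<partial>lborel) \<le> c"
  shows "(\<integral>\<^sup>+x. f x * indicator {0..} x \<partial>lborel) \<le> c"
proof -
  have "(SUP i. f x * indicator {0..real i} x) = f x * indicator {0..} x" for x
  proof (rule LIMSEQ_unique[OF LIMSEQ_SUP])
    obtain i where "x < real i" using reals_Archimedean2 ..
    then have "eventually (\<lambda>i. f x * indicator {0..real i} x = f x * indicator {0..} x) sequentially"
      by (auto simp: frequently_def intro!: eventually_sequentiallyI[where c=i] split: split_indicator)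
    then show "(\<lambda>i. f x * indicator {0..real i} x) \<longlonglongrightarrow> f x * indicator {0..} x"
      by (rule tendsto_eventually)
  qed (auto simp: incseq_def le_fun_def split: split_indicator)
  then have "(\<integral>\<^sup>+x. f x * indicator {0..} x \<partial>lborel) = (\<integral>\<^sup>+x. (SUP i. f x * indicator {0..real i} x) \<partial>lborel)"
    by simp
  also have "\<dots> = (SUP i. \<integral>\<^sup>+x. f x * indicator {0..real i} x \<partial>lborel)"
    by (rule nn_integral_monotone_convergence_SUP) (auto simp: incseq_def le_fun_def split: split_indicator)
  also have "\<dots> \<le> c"
    by (intro SUP_least le) simp
  finally show ?thesis .
qed

lemma tilt_rate_algebra:
  fixes r p x y :: real
  assumes "0 < r" "x < 1" "y < 1"
  shows "1 + (2 * (r * p) * (x / (1 - x)) + 2 * (r * (1 - p)) * (y / (1 - y))) / (2 * r)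
       = p / (1 - x) + (1 - p) / (1 - y)"
proof -
  define u where "u = 1 / (1 - x)"
  define v where "v = 1 / (1 - y)"
  have uv: "x / (1 - x) = u - 1" "y / (1 - y) = v - 1" "p / (1 - x) = p * u" "(1 - p) / (1 - y) = (1 - p) * v"
    using assms unfolding u_def v_def by (auto simp: field_simps)
  show ?thesis unfolding uv using assms by (simp add: field_simps)
qed

locale tilt_schedule =
  fixes d :: real and N :: nat and \<theta>x \<theta>y :: "nat \<Rightarrow> real"
  assumes d_pos: "0 < d" and \<theta>x_lt_1: "\<And>l. \<theta>x l < 1" and \<theta>y_lt_1: "\<And>l. \<theta>y l < 1"
begin

definition in_block :: "nat \<Rightarrow> real \<Rightarrow> bool" where
  "in_block l t \<longleftrightarrow> real l * d < t \<and> t \<le> real (Suc l) * d"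

definition block_fun :: "(nat \<Rightarrow> real) \<Rightarrow> real \<Rightarrow> real" where
  "block_fun c t = (\<Sum>l<N. if in_block l t then c l else 0)"

text \<open>
  A jump of size Exp(1) at rate r, tilted by \<open>\<theta> < 1\<close>, has exponential moment
  \<open>r (E e\<^sup>\<theta>\<^sup>e - 1) = r \<theta> / (1 - \<theta>)\<close>; these are the compensator rates in state z.
\<close>
definition compensator_rate :: "real \<times> real \<Rightarrow> nat \<Rightarrow> real" where
  "compensator_rate z l = 2 * rateRX z * (\<theta>x l / (1 - \<theta>x l)) + 2 * rateRY z * (\<theta>y l / (1 - \<theta>y l))"

definition compensator :: "real \<times> real \<Rightarrow> real \<Rightarrow> real \<Rightarrow> real" where
  "compensator z a b = (\<Sum>l<N. compensator_rate z l * overlap a b (real l * d) (real (Suc l) * d))"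

definition tilt :: "real \<Rightarrow> bool \<Rightarrow> real \<Rightarrow> real" where
  "tilt t horizontal e = (if horizontal then block_fun \<theta>x t * e else block_fun \<theta>y t * e)"

lemma in_block_le:
  assumes "in_block l t" "in_block l' t"
  shows "l \<le> l'"
proof (rule ccontr)
  assume "\<not> l \<le> l'"
  then have "real (Suc l') * d \<le> real l * d" using d_pos by (intro mult_right_mono) auto
  then show False using assms unfolding in_block_def by linarith
qed

lemma in_block_unique: "in_block l t \<Longrightarrow> in_block l' t \<Longrightarrow> l = l'"
  using in_block_le[of l t l'] in_block_le[of l' t l] by (rule antisym)

lemma block_fun_eq:
  assumes "l < N" "in_block l t"
  shows "block_fun c t = c l"
proof -
  have "block_fun c t = (\<Sum>l'<N. if l' = l then c l else 0)"
    unfolding block_fun_def by (intro sum.cong refl) (use assms in_block_unique in auto)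
  then show ?thesis using assms by simp
qed

lemma block_fun_eq_0: "(\<And>l. l < N \<Longrightarrow> \<not> in_block l t) \<Longrightarrow> block_fun c t = 0"
  unfolding block_fun_def by (intro sum.neutral) auto

lemma block_fun_lt_1: "(\<And>l. c l < 1) \<Longrightarrow> block_fun c t < 1"
  by (cases "\<exists>l<N. in_block l t") (auto simp: block_fun_eq block_fun_eq_0)

lemma borel_measurable_block_fun [measurable]: "block_fun c \<in> borel_measurable borel"
  unfolding block_fun_def[abs_def] in_block_def by measurable

lemma borel_measurable_compensator [measurable (raw)]:
  assumes [measurable]: "f \<in> borel_measurable M" "g \<in> borel_measurable M" "k \<in> borel_measurable M"
  shows "(\<lambda>x. compensator (f x) (g x) (k x)) \<in> borel_measurable M"
  unfolding compensator_def compensator_rate_def by measurable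

lemma borel_measurable_tilt [measurable (raw)]:
  assumes [measurable]: "f \<in> borel_measurable M" "Measurable.pred M P" "g \<in> borel_measurable M"
  shows "(\<lambda>x. tilt (f x) (P x) (g x)) \<in> borel_measurable M"
  unfolding tilt_def by measurable

lemma compensator_same: "compensator z a a = 0"
  unfolding compensator_def by (simp add: overlap_same)

lemma compensator_rate_identity:
  assumes "0 \<le> fst z" "0 \<le> snd z"
  shows "1 + compensator_rate z l / (2 * rateR z) = dirP z / (1 - \<theta>x l) + (1 - dirP z) / (1 - \<theta>y l)"
  using tilt_rate_algebra[OF _ \<theta>x_lt_1 \<theta>y_lt_1] rateR_ge_1[OF assms]
  unfolding compensator_rate_def rateRX_def rateRY_def by simp

lemma has_real_derivative_compensator:
  assumes "t0 < \<tau>" "\<And>l. l \<le> N \<Longrightarrow> \<tau> \<noteq> real l * d"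
  shows "((\<lambda>b. compensator z t0 b) has_real_derivative block_fun (compensator_rate z) \<tau>) (at \<tau>)"
  unfolding compensator_def block_fun_def
proof (intro DERIV_sum)
  fix l assume "l \<in> {..<N}"
  then have "\<tau> \<noteq> real (Suc l) * d" "\<tau> \<noteq> max t0 (real l * d)"
    using assms(1) assms(2)[of l] assms(2)[of "Suc l"] by (auto simp: max_def)
  then have "((\<lambda>b. overlap t0 b (real l * d) (real (Suc l) * d)) has_real_derivative
      (if max t0 (real l * d) < \<tau> \<and> \<tau> < real (Suc l) * d then 1 else 0)) (at \<tau>)"
    by (rule has_real_derivative_overlap)
  moreover have "(max t0 (real l * d) < \<tau> \<and> \<tau> < real (Suc l) * d) = in_block l \<tau>"
    using \<open>\<tau> \<noteq> real (Suc l) * d\<close> assms(1) unfolding in_block_def by auto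
  ultimately have "((\<lambda>b. overlap t0 b (real l * d) (real (Suc l) * d)) has_real_derivative
      (if in_block l \<tau> then 1 else 0)) (at \<tau>)"
    by simp
  from DERIV_cmult[OF this, of "compensator_rate z l"]
  show "((\<lambda>b. compensator_rate z l * overlap t0 b (real l * d) (real (Suc l) * d)) has_real_derivative
      (if in_block l \<tau> then compensator_rate z l else 0)) (at \<tau>)"
    by (cases "in_block l \<tau>") simp_all
qed

lemma block_fun_compensator_rate_identity:
  assumes "0 \<le> fst z" "0 \<le> snd z"
  shows "1 + block_fun (compensator_rate z) \<tau> / (2 * rateR z)
    = dirP z / (1 - block_fun \<theta>x \<tau>) + (1 - dirP z) / (1 - block_fun \<theta>y \<tau>)"
proof (cases "\<exists>l<N. in_block l \<tau>")
  case True
  then show ?thesis using compensator_rate_identity[OF assms] by (auto simp: block_fun_eq)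
qed (simp add: block_fun_eq_0)

text \<open>
  For a holding time of rate \<open>2 R\<close> started at time t0, the tilted density is the derivative of
  \<open>h \<mapsto> - exp (- h - compensator z t0 (t0 + h / (2 R)))\<close>, which increases from -1 to at most 0.
\<close>
lemma nn_integral_holding_le_1:
  fixes z :: "real \<times> real" and t0 :: real
  assumes z: "0 \<le> fst z" "0 \<le> snd z"
  defines "t h \<equiv> t0 + h / (2 * rateR z)"
  shows "(\<integral>\<^sup>+h. ennreal (exp (- h - compensator z t0 (t h)) *
            (dirP z / (1 - block_fun \<theta>x (t h)) + (1 - dirP z) / (1 - block_fun \<theta>y (t h))))
          * indicator {0..} h \<partial>lborel) \<le> 1"
proof -
  define R where "R = rateR z"
  have R: "R \<ge> 1" using rateR_ge_1[OF z] by (simp add: R_def)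
  define f where "f h = exp (- h - compensator z t0 (t h)) *
    (dirP z / (1 - block_fun \<theta>x (t h)) + (1 - dirP z) / (1 - block_fun \<theta>y (t h)))" for h
  define F where "F h = - exp (- h - compensator z t0 (t h))" for h
  have f_nonneg: "0 \<le> f h" for h
    using dirP_bounds[OF z] block_fun_lt_1[of \<theta>x, OF \<theta>x_lt_1] block_fun_lt_1[of \<theta>y, OF \<theta>y_lt_1]
    unfolding f_def by (intro mult_nonneg_nonneg add_nonneg_nonneg divide_nonneg_pos) auto
  have [measurable]: "f \<in> borel_measurable borel"
    unfolding f_def t_def by measurable
  define H where "H = (\<lambda>l. 2 * R * (real l * d - t0)) ` {..N}"
  have t_inv: "h = 2 * R * (t h - t0)" for h
    unfolding t_def R_def[symmetric] using R by (simp add: field_simps)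
  have deriv: "(F has_real_derivative f h) (at h)" if h: "0 < h" "h \<notin> H" for h
  proof -
    have "t0 < t h" unfolding t_def R_def[symmetric] using h R by (simp add: field_simps)
    moreover have "t h \<noteq> real l * d" if "l \<le> N" for l
      using h(2) t_inv[of h] that unfolding H_def by auto
    ultimately have "((\<lambda>h. compensator z t0 (t h)) has_real_derivative
        block_fun (compensator_rate z) (t h) * (1 / (2 * R))) (at h)"
      using has_real_derivative_compensator
      by (intro DERIV_chain2[where f="compensator z t0"]) (auto simp: t_def R_def intro!: derivative_eq_intros)
    then have "(F has_real_derivative exp (- h - compensator z t0 (t h)) * (1 + block_fun (compensator_rate z) (t h) / (2 * R))) (at h)"
      unfolding F_def by (auto intro!: derivative_eq_intros simp: algebra_simps)
    then show ?thesis
      unfolding f_def R_def block_fun_compensator_rate_identity[OF z] .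
  qed
  have "(\<integral>\<^sup>+h. ennreal (f h) * indicator {0..b} h \<partial>lborel) \<le> 1" if "0 \<le> b" for b
  proof -
    have "(f has_integral F b - F 0) {0..b}"
    proof (rule fundamental_theorem_of_calculus_interior_strong[of H])
      show "continuous_on {0..b} F"
        unfolding F_def compensator_def t_def using R unfolding R_def by (intro continuous_intros) auto
    qed (use \<open>0 \<le> b\<close> deriv in \<open>auto simp: H_def has_real_derivative_iff_has_vector_derivative[symmetric]\<close>)
    then have "integral\<^sup>N lborel (\<lambda>x. indicator {0..b} x * f x) = F b - F 0"
      by (intro nn_integral_has_integral_lebesgue) (use f_nonneg in auto)
    moreover have "F b - F 0 \<le> 1"
      unfolding F_def t_def by (simp add: compensator_same)
    ultimately show ?thesis by (simp add: mult.commute ennreal_mult'' ennreal_indicator)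
  qed
  then show ?thesis
    unfolding f_def[symmetric] by (intro nn_integral_atLeast_le) measurable
qed

lemma nn_integral_one_step_le_1:
  fixes z :: "real \<times> real" and t0 :: real
  assumes z: "0 \<le> fst z" "0 \<le> snd z"
  defines "t h \<equiv> t0 + h / (2 * rateR z)"
  shows "(\<integral>\<^sup>+s. ennreal (exp (tilt (t (fst (fst s))) (snd s < dirP z) (max 0 (snd (fst s)))
            - compensator z t0 (t (fst (fst s))))) \<partial>jump_meas) \<le> 1"
proof -
  define P where "P = dirP z"
  have P: "0 \<le> P" "P \<le> 1" using dirP_bounds[OF z] by (auto simp: P_def)
  define C where "C h = compensator z t0 (t h)" for h
  define G where "G h = P / (1 - block_fun \<theta>x (t h)) + (1 - P) / (1 - block_fun \<theta>y (t h))" for h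
  have [measurable]: "t \<in> borel_measurable borel" "C \<in> borel_measurable borel" "G \<in> borel_measurable borel"
    unfolding C_def G_def t_def by measurable
  have "(\<integral>\<^sup>+s. ennreal (exp (tilt (t (fst (fst s))) (snd s < P) (max 0 (snd (fst s))) - C (fst (fst s)))) \<partial>jump_meas)
      = (\<integral>\<^sup>+h. \<integral>\<^sup>+e. \<integral>\<^sup>+v. ennreal (exp (tilt (t h) (v < P) (max 0 e) - C h)) \<partial>unif_meas \<partial>exp_meas \<partial>exp_meas)"
    by (subst nn_integral_jump_meas) simp_all
  also have "\<dots> = (\<integral>\<^sup>+h. \<integral>\<^sup>+e. ennreal (P * exp (block_fun \<theta>x (t h) * max 0 e - C h)
      + (1 - P) * exp (block_fun \<theta>y (t h) * max 0 e - C h)) \<partial>exp_meas \<partial>exp_meas)"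
    unfolding tilt_def using P
    by (simp add: if_distrib[of "\<lambda>x. exp (x - _)"] nn_integral_unif_meas_threshold del: exp_diff)
  also have "\<dots> = (\<integral>\<^sup>+h. ennreal (exp (- C h) * G h) \<partial>exp_meas)"
    unfolding G_def using P block_fun_lt_1[of \<theta>x, OF \<theta>x_lt_1] block_fun_lt_1[of \<theta>y, OF \<theta>y_lt_1]
    by (simp add: nn_integral_exp_meas_mixture del: ennreal_plus)
  also have "\<dots> = (\<integral>\<^sup>+h. ennreal (exp (- h - C h) * G h) * indicator {0..} h \<partial>lborel)"
    by (rule nn_integral_exp_meas_density) measurable
  also have "\<dots> \<le> 1"
    using nn_integral_holding_le_1[OF z, of t0] unfolding C_def G_def t_def P_def .
  finally show ?thesis unfolding C_def P_def .
qed

end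

text \<open>
  Jump chain and jump times of the process; jump sizes are clipped at 0, so that the chain stays in
  the closed quadrant for every sample and agrees with \<^const>\<open>chain\<close> almost surely.
\<close>
primrec jump_chain :: "real \<times> real \<Rightarrow> omega \<Rightarrow> nat \<Rightarrow> real \<times> real" where
  "jump_chain z0 \<omega> 0 = z0"
| "jump_chain z0 \<omega> (Suc k) =
     (if snd (\<omega> k) < dirP (jump_chain z0 \<omega> k) then jump_chain z0 \<omega> k + (max 0 (snd (fst (\<omega> k))), 0)
      else jump_chain z0 \<omega> k + (0, max 0 (snd (fst (\<omega> k)))))"

definition holding_time :: "real \<times> real \<Rightarrow> omega \<Rightarrow> nat \<Rightarrow> real" where
  "holding_time z0 \<omega> k = fst (fst (\<omega> k)) / (2 * rateR (jump_chain z0 \<omega> k))"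

definition jump_time :: "real \<times> real \<Rightarrow> real \<Rightarrow> omega \<Rightarrow> nat \<Rightarrow> real" where
  "jump_time z0 t0 \<omega> k = t0 + (\<Sum>j<k. holding_time z0 \<omega> j)"

lemma jump_chain_Suc_shift: "jump_chain z0 \<omega> (Suc k) = jump_chain (jump_chain z0 \<omega> 1) (\<lambda>n. \<omega> (Suc n)) k"
proof (induction k)
  case 0
  then show ?case by simp
next
  case (Suc k)
  show ?case
    by (simp only: jump_chain.simps(2)[of z0 \<omega> "Suc k"]
        jump_chain.simps(2)[of "jump_chain z0 \<omega> 1" "\<lambda>n. \<omega> (Suc n)" k] Suc.IH)
qed

lemma holding_time_Suc_shift:
  "holding_time z0 \<omega> (Suc j) = holding_time (jump_chain z0 \<omega> 1) (\<lambda>n. \<omega> (Suc n)) j"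
  unfolding holding_time_def by (simp only: jump_chain_Suc_shift)

lemma jump_time_Suc_shift:
  "jump_time z0 t0 \<omega> (Suc k) = jump_time (jump_chain z0 \<omega> 1) (jump_time z0 t0 \<omega> 1) (\<lambda>n. \<omega> (Suc n)) k"
  unfolding jump_time_def sum.lessThan_Suc_shift holding_time_Suc_shift by simp

lemma jump_chain_nonneg:
  "0 \<le> fst z0 \<Longrightarrow> 0 \<le> snd z0 \<Longrightarrow> 0 \<le> fst (jump_chain z0 \<omega> k) \<and> 0 \<le> snd (jump_chain z0 \<omega> k)"
  by (induction k) auto

lemma jump_chain_sum:
  "fst (jump_chain z0 \<omega> k) + snd (jump_chain z0 \<omega> k) = fst z0 + snd z0 + (\<Sum>m<k. max 0 (snd (fst (\<omega> m))))"
  by (induction k) auto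

lemma measurable_jump_chain [measurable]: "(\<lambda>\<omega>. jump_chain z0 \<omega> k) \<in> borel_measurable Q_meas"
proof (induction k)
  case 0
  then show ?case by simp
next
  case (Suc k)
  note Suc[measurable]
  show ?case unfolding jump_chain.simps by measurable
qed

lemma strict_mono_jump_time:
  assumes "0 \<le> fst z0" "0 \<le> snd z0" "\<And>k. 0 < fst (fst (\<omega> k))"
  shows "strict_mono (jump_time z0 t0 \<omega>)"
proof (rule strict_mono_Suc_iff[THEN iffD2], intro allI)
  fix k
  have "1 \<le> rateR (jump_chain z0 \<omega> k)" using jump_chain_nonneg[OF assms(1,2)] rateR_ge_1 by blast
  then show "jump_time z0 t0 \<omega> k < jump_time z0 t0 \<omega> (Suc k)"
    unfolding jump_time_def holding_time_def using assms(3)[of k] by simp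
qed

context tilt_schedule
begin

definition tilt_increment :: "real \<times> real \<Rightarrow> real \<Rightarrow> omega \<Rightarrow> nat \<Rightarrow> real" where
  "tilt_increment z0 t0 \<omega> m =
     tilt (jump_time z0 t0 \<omega> (Suc m)) (snd (\<omega> m) < dirP (jump_chain z0 \<omega> m)) (max 0 (snd (fst (\<omega> m))))
     - compensator (jump_chain z0 \<omega> m) (jump_time z0 t0 \<omega> m) (jump_time z0 t0 \<omega> (Suc m))"

definition tilt_weight :: "nat \<Rightarrow> real \<times> real \<Rightarrow> real \<Rightarrow> omega \<Rightarrow> real" where
  "tilt_weight k z0 t0 \<omega> = exp (\<Sum>m<k. tilt_increment z0 t0 \<omega> m)"

lemma borel_measurable_tilt_weight [measurable]: "tilt_weight k z0 t0 \<in> borel_measurable Q_meas"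
  unfolding tilt_weight_def[abs_def] tilt_increment_def jump_time_def holding_time_def by measurable

lemma tilt_weight_Suc:
  "tilt_weight (Suc k) z0 t0 \<omega> = exp (tilt_increment z0 t0 \<omega> 0) *
     tilt_weight k (jump_chain z0 \<omega> 1) (jump_time z0 t0 \<omega> 1) (\<lambda>n. \<omega> (Suc n))"
proof -
  have "tilt_increment z0 t0 \<omega> (Suc m) = tilt_increment (jump_chain z0 \<omega> 1) (jump_time z0 t0 \<omega> 1) (\<lambda>n. \<omega> (Suc n)) m" for m
    unfolding tilt_increment_def jump_chain_Suc_shift[of z0 \<omega>] jump_time_Suc_shift[of z0 t0 \<omega>] ..
  then show ?thesis
    unfolding tilt_weight_def sum.lessThan_Suc_shift exp_add by simp
qed

text \<open>The tilted weights form a supermartingale along the jump chain.\<close>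
lemma nn_integral_tilt_weight_le_1:
  assumes "0 \<le> fst z0" "0 \<le> snd z0"
  shows "(\<integral>\<^sup>+\<omega>. ennreal (tilt_weight k z0 t0 \<omega>) \<partial>Q_meas) \<le> 1"
  using assms
proof (induction k arbitrary: z0 t0)
  case 0
  show ?case using prob_space.emeasure_space_1[OF prob_space_Q_meas] by (simp add: tilt_weight_def)
next
  case (Suc k)
  define t where "t h = t0 + h / (2 * rateR z0)" for h
  define first where "first s = tilt (t (fst (fst s))) (snd s < dirP z0) (max 0 (snd (fst s)))
        - compensator z0 t0 (t (fst (fst s)))" for s :: "(real \<times> real) \<times> real"
  define z1 where "z1 s = (if snd s < dirP z0 then z0 + (max 0 (snd (fst s)), 0) else z0 + (0, max 0 (snd (fst s))))"
    for s :: "(real \<times> real) \<times> real"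
  have z1: "0 \<le> fst (z1 s)" "0 \<le> snd (z1 s)" for s
    using Suc.prems unfolding z1_def by auto
  have split: "tilt_weight (Suc k) z0 t0 (case_nat s \<omega>) = exp (first s) * tilt_weight k (z1 s) (t (fst (fst s))) \<omega>"
    for s \<omega>
    unfolding tilt_weight_Suc by (simp add: first_def z1_def t_def tilt_increment_def jump_time_def holding_time_def)
  have "(\<integral>\<^sup>+\<omega>. ennreal (tilt_weight (Suc k) z0 t0 \<omega>) \<partial>Q_meas)
      = (\<integral>\<^sup>+s. ennreal (exp (first s)) * (\<integral>\<^sup>+\<omega>. ennreal (tilt_weight k (z1 s) (t (fst (fst s))) \<omega>) \<partial>Q_meas) \<partial>jump_meas)"
    by (subst nn_integral_Q_meas_case_nat) (simp_all add: split ennreal_mult' nn_integral_cmult)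
  also have "\<dots> \<le> (\<integral>\<^sup>+s. ennreal (exp (first s)) \<partial>jump_meas)"
    by (intro nn_integral_mono) (use Suc.IH[OF z1] in \<open>auto intro: mult_left_le\<close>)
  also have "\<dots> \<le> 1"
    unfolding first_def t_def by (rule nn_integral_one_step_le_1[OF Suc.prems])
  finally show ?case .
qed

lemma tilt_increment_eq_0:
  assumes "strict_mono (jump_time z0 t0 \<omega>)" "real N * d \<le> jump_time z0 t0 \<omega> m"
  shows "tilt_increment z0 t0 \<omega> m = 0"
proof -
  have lt: "jump_time z0 t0 \<omega> m < jump_time z0 t0 \<omega> (Suc m)"
    using assms(1) by (simp add: strict_mono_Suc_iff)
  have block_le: "real (Suc l) * d \<le> real N * d" if "l < N" for l
    using that d_pos by (intro mult_right_mono) auto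
  have "\<not> in_block l (jump_time z0 t0 \<omega> (Suc m))" if "l < N" for l
    using block_le[OF that] assms(2) lt unfolding in_block_def by linarith
  then have "block_fun c (jump_time z0 t0 \<omega> (Suc m)) = 0" for c
    by (intro block_fun_eq_0) auto
  moreover have "overlap (jump_time z0 t0 \<omega> m) (jump_time z0 t0 \<omega> (Suc m)) (real l * d) (real (Suc l) * d) = 0"
    if "l < N" for l
    using block_le[OF that] assms(2) unfolding overlap_def by auto
  ultimately show ?thesis
    unfolding tilt_increment_def tilt_def compensator_def by simp
qed

end

section \<open>Pathwise lower bound for the tilt exponent\<close>

definition jump_count :: "(nat \<Rightarrow> real) \<Rightarrow> real \<Rightarrow> nat" where
  "jump_count S t = (LEAST k. t < S (Suc k))"

lemma jump_count_le_iff: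
  assumes "strict_mono S" "t < S (Suc k0)"
  shows "jump_count S t \<le> m \<longleftrightarrow> t < S (Suc m)"
proof
  assume "jump_count S t \<le> m"
  moreover have "t < S (Suc (jump_count S t))"
    unfolding jump_count_def by (rule LeastI[of _ k0]) (rule assms(2))
  ultimately show "t < S (Suc m)"
    using strict_mono_less_eq[OF assms(1), of "Suc (jump_count S t)" "Suc m"] by auto
next
  assume "t < S (Suc m)"
  then show "jump_count S t \<le> m" unfolding jump_count_def by (rule Least_le)
qed

lemma jump_count_eq:
  assumes "strict_mono S" "S m \<le> t" "t < S (Suc m)"
  shows "jump_count S t = m"
proof (rule antisym)
  show "jump_count S t \<le> m" using jump_count_le_iff[OF assms(1,3)] assms(3) by simp
  show "m \<le> jump_count S t"
  proof (rule ccontr)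
    assume "\<not> m \<le> jump_count S t"
    then have "S (Suc (jump_count S t)) \<le> S m" using strict_mono_less_eq[OF assms(1)] by simp
    moreover have "t < S (Suc (jump_count S t))"
      using jump_count_le_iff[OF assms(1,3), of "jump_count S t"] by simp
    ultimately show False using assms(2) by linarith
  qed
qed

lemma sum_increments_jump_count:
  fixes F :: "nat \<Rightarrow> real"
  assumes S: "strict_mono S" and "a \<le> b" and b: "b < S (Suc k)"
  shows "(\<Sum>m<Suc k. if a < S (Suc m) \<and> S (Suc m) \<le> b then F (Suc m) - F m else 0)
       = F (jump_count S b) - F (jump_count S a)"
proof -
  have a: "a < S (Suc k)" using assms by linarith
  have a_iff: "a < S (Suc m) \<longleftrightarrow> jump_count S a \<le> m" for m
    using jump_count_le_iff[OF S a, of m] by simp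
  have b_iff: "S (Suc m) \<le> b \<longleftrightarrow> m < jump_count S b" for m
    using jump_count_le_iff[OF S b, of m] by linarith
  have "jump_count S b \<le> k" using jump_count_le_iff[OF S b, of k] b by simp
  then have "{m \<in> {..<Suc k}. a < S (Suc m) \<and> S (Suc m) \<le> b} = {jump_count S a..<jump_count S b}"
    unfolding a_iff b_iff by auto
  moreover have "a < S (Suc (jump_count S b))"
    using jump_count_le_iff[OF S b, of "jump_count S b"] \<open>a \<le> b\<close> by simp
  then have "jump_count S a \<le> jump_count S b" using a_iff by blast
  ultimately show ?thesis
    by (subst sum.inter_filter[symmetric]) (simp_all add: sum_Suc_diff')
qed

context tilt_schedule
begin

lemma block_end_less:
  assumes "l < N" "real N * d < x"
  shows "real (Suc l) * d < x"
proof -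
  have "real (Suc l) * d \<le> real N * d" using assms(1) d_pos by (intro mult_right_mono) auto
  then show ?thesis using assms(2) by linarith
qed

lemma sum_tilt_eq_block_increments:
  fixes S :: "nat \<Rightarrow> real" and c :: "nat \<Rightarrow> real \<times> real" and horizontal :: "nat \<Rightarrow> bool" and e :: "nat \<Rightarrow> real"
  assumes S: "strict_mono S" and Sk: "real N * d < S (Suc k)"
    and c: "\<And>m. c (Suc m) = (if horizontal m then c m + (e m, 0) else c m + (0, e m))"
  shows "(\<Sum>m<Suc k. tilt (S (Suc m)) (horizontal m) (e m))
      = (\<Sum>l<N. \<theta>x l * (fst (c (jump_count S (real (Suc l) * d))) - fst (c (jump_count S (real l * d))))
               + \<theta>y l * (snd (c (jump_count S (real (Suc l) * d))) - snd (c (jump_count S (real l * d)))))"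
proof -
  have tilt_eq: "tilt t (horizontal m) (e m)
      = block_fun \<theta>x t * (fst (c (Suc m)) - fst (c m)) + block_fun \<theta>y t * (snd (c (Suc m)) - snd (c m))" for t m
    unfolding tilt_def c by simp
  have "(\<Sum>m<Suc k. tilt (S (Suc m)) (horizontal m) (e m))
      = (\<Sum>m<Suc k. \<Sum>l<N. (if in_block l (S (Suc m)) then \<theta>x l * (fst (c (Suc m)) - fst (c m)) else 0)
                          + (if in_block l (S (Suc m)) then \<theta>y l * (snd (c (Suc m)) - snd (c m)) else 0))"
    unfolding tilt_eq block_fun_def sum_distrib_right sum.distrib[symmetric]
    by (intro sum.cong refl) auto
  also have "\<dots> = (\<Sum>l<N. \<Sum>m<Suc k. (if in_block l (S (Suc m)) then \<theta>x l * (fst (c (Suc m)) - fst (c m)) else 0)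
                          + (if in_block l (S (Suc m)) then \<theta>y l * (snd (c (Suc m)) - snd (c m)) else 0))"
    by (rule sum.swap)
  also have "\<dots> = (\<Sum>l<N. \<theta>x l * (fst (c (jump_count S (real (Suc l) * d))) - fst (c (jump_count S (real l * d))))
             + \<theta>y l * (snd (c (jump_count S (real (Suc l) * d))) - snd (c (jump_count S (real l * d)))))"
  proof (intro sum.cong refl)
    fix l assume "l \<in> {..<N}"
    then have "l < N" by simp
    have "real l * d \<le> real (Suc l) * d" using d_pos by simp
    note window = sum_increments_jump_count[OF S this block_end_less[OF \<open>l < N\<close> Sk]]
    show "(\<Sum>m<Suc k. (if in_block l (S (Suc m)) then \<theta>x l * (fst (c (Suc m)) - fst (c m)) else 0)
                   + (if in_block l (S (Suc m)) then \<theta>y l * (snd (c (Suc m)) - snd (c m)) else 0))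
        = \<theta>x l * (fst (c (jump_count S (real (Suc l) * d))) - fst (c (jump_count S (real l * d))))
          + \<theta>y l * (snd (c (jump_count S (real (Suc l) * d))) - snd (c (jump_count S (real l * d))))"
      using \<open>l \<in> {..<N}\<close>
      unfolding window[of "\<lambda>m. fst (c m)", symmetric] window[of "\<lambda>m. snd (c m)", symmetric]
        sum.distrib sum_distrib_left
      by (intro arg_cong2[where f="(+)"] sum.cong refl) (auto simp: in_block_def)
  qed
  finally show ?thesis .
qed

lemma sum_compensator_le:
  fixes S :: "nat \<Rightarrow> real" and c :: "nat \<Rightarrow> real \<times> real"
  assumes S: "strict_mono S" "S 0 = 0" and Sk: "real N * d < S (Suc k)"
    and \<kappa>: "\<And>l m. l < N \<Longrightarrow> m < Suc k \<Longrightarrow> 0 < overlap (S m) (S (Suc m)) (real l * d) (real (Suc l) * d)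
      \<Longrightarrow> compensator_rate (c m) l \<le> \<kappa> l"
  shows "(\<Sum>m<Suc k. compensator (c m) (S m) (S (Suc m))) \<le> (\<Sum>l<N. \<kappa> l * d)"
proof -
  have "(\<Sum>m<Suc k. compensator (c m) (S m) (S (Suc m)))
      = (\<Sum>l<N. \<Sum>m<Suc k. compensator_rate (c m) l * overlap (S m) (S (Suc m)) (real l * d) (real (Suc l) * d))"
    unfolding compensator_def by (rule sum.swap)
  also have "\<dots> \<le> (\<Sum>l<N. \<Sum>m<Suc k. \<kappa> l * overlap (S m) (S (Suc m)) (real l * d) (real (Suc l) * d))"
  proof (intro sum_mono)
    fix l m assume "l \<in> {..<N}" "m \<in> {..<Suc k}"
    then show "compensator_rate (c m) l * overlap (S m) (S (Suc m)) (real l * d) (real (Suc l) * d)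
        \<le> \<kappa> l * overlap (S m) (S (Suc m)) (real l * d) (real (Suc l) * d)"
      using \<kappa>[of l m] overlap_nonneg[of "S m" "S (Suc m)" "real l * d" "real (Suc l) * d"]
      by (cases "0 < overlap (S m) (S (Suc m)) (real l * d) (real (Suc l) * d)") auto
  qed
  also have "\<dots> = (\<Sum>l<N. \<kappa> l * d)"
  proof (intro sum.cong refl)
    fix l assume "l \<in> {..<N}"
    then have l: "real l * d \<le> real (Suc l) * d" "real (Suc l) * d < S (Suc k)"
      using d_pos block_end_less[OF _ Sk] by simp_all
    have "(\<Sum>m<Suc k. overlap (S m) (S (Suc m)) (real l * d) (real (Suc l) * d))
        = overlap (S 0) (S (Suc k)) (real l * d) (real (Suc l) * d)"
      using l by (intro sum_overlap_telescope strict_mono_mono[OF S(1)]) auto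
    also have "\<dots> = d"
      using S(2) l d_pos unfolding overlap_def by (auto simp: algebra_simps)
    finally show "(\<Sum>m<Suc k. \<kappa> l * overlap (S m) (S (Suc m)) (real l * d) (real (Suc l) * d)) = \<kappa> l * d"
      by (simp add: sum_distrib_left[symmetric])
  qed
  finally show ?thesis .
qed

lemma sum_tilt_increments_ge:
  fixes S :: "nat \<Rightarrow> real" and c :: "nat \<Rightarrow> real \<times> real" and horizontal :: "nat \<Rightarrow> bool" and e :: "nat \<Rightarrow> real"
  assumes S: "strict_mono S" "S 0 = 0" and Sk: "real N * d < S (Suc k)"
    and c: "\<And>m. c (Suc m) = (if horizontal m then c m + (e m, 0) else c m + (0, e m))"
    and \<kappa>: "\<And>l m. l < N \<Longrightarrow> m < Suc k \<Longrightarrow> 0 < overlap (S m) (S (Suc m)) (real l * d) (real (Suc l) * d)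
      \<Longrightarrow> compensator_rate (c m) l \<le> \<kappa> l"
  shows "(\<Sum>l<N. \<theta>x l * (fst (c (jump_count S (real (Suc l) * d))) - fst (c (jump_count S (real l * d))))
               + \<theta>y l * (snd (c (jump_count S (real (Suc l) * d))) - snd (c (jump_count S (real l * d)))) - \<kappa> l * d)
     \<le> (\<Sum>m<Suc k. tilt (S (Suc m)) (horizontal m) (e m) - compensator (c m) (S m) (S (Suc m)))"
proof -
  have "(\<Sum>m<Suc k. tilt (S (Suc m)) (horizontal m) (e m))
      = (\<Sum>l<N. \<theta>x l * (fst (c (jump_count S (real (Suc l) * d))) - fst (c (jump_count S (real l * d))))
               + \<theta>y l * (snd (c (jump_count S (real (Suc l) * d))) - snd (c (jump_count S (real l * d)))))"
    using S(1) Sk c by (rule sum_tilt_eq_block_increments)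
  moreover have "(\<Sum>m<Suc k. compensator (c m) (S m) (S (Suc m))) \<le> (\<Sum>l<N. \<kappa> l * d)"
    using S Sk \<kappa> by (rule sum_compensator_le)
  ultimately show ?thesis
    unfolding sum_subtractf by linarith
qed

end

section \<open>Optimising the tilt\<close>

text \<open>
  \<open>\<theta> \<Delta> - a \<theta> / (1 - \<theta>)\<close> is the gain of the tilt \<open>\<theta> < 1\<close> against an increment \<open>\<Delta>\<close> accumulated at
  total rate a; its supremum over \<open>\<theta>\<close> is \<open>(\<surd>a - \<surd>\<Delta>)\<^sup>2\<close>, attained at \<open>\<theta> = 1 - \<surd>a / \<surd>\<Delta>\<close>.
\<close>
lemma tilt_gain_optimal:
  fixes a x :: real
  assumes "0 < x" "0 < a"
  defines "\<theta> \<equiv> 1 - sqrt a / sqrt x"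
  shows "\<theta> * x - a * \<theta> / (1 - \<theta>) = (sqrt a - sqrt x)^2"
proof -
  have "x = sqrt x * sqrt x" "a = sqrt a * sqrt a" using assms by simp_all
  moreover have "sqrt x > 0" "sqrt a > 0" using assms by simp_all
  ultimately show ?thesis
    unfolding \<theta>_def by (simp add: field_simps power2_eq_square)
qed

lemma exists_nonpos_tilt:
  fixes a x \<delta> :: real
  assumes "x < a" "0 \<le> x" "0 < \<delta>"
  shows "\<exists>\<theta>\<le>0. (sqrt a - sqrt x)^2 - \<delta> \<le> \<theta> * x - a * \<theta> / (1 - \<theta>)"
proof (cases "x = 0")
  case True
  have a: "0 < a" using assms by linarith
  have "- a * (- a / \<delta>) / (1 - (- a / \<delta>)) = a * a / (\<delta> + a)"
    using a assms by (simp add: field_simps)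
  moreover have "a - \<delta> \<le> a * a / (\<delta> + a)"
    using a assms by (simp add: field_simps)
  ultimately show ?thesis
    using True a assms by (intro exI[of _ "- a / \<delta>"]) simp
next
  case False
  then have "0 < x" "0 < a" using assms by simp_all
  moreover have "sqrt x \<le> sqrt a" using assms by simp
  ultimately show ?thesis
    using tilt_gain_optimal[of x a] assms
    by (intro exI[of _ "1 - sqrt a / sqrt x"]) (simp add: field_simps)
qed

lemma exists_nonneg_tilt:
  fixes a x \<delta> :: real
  assumes "a < x" "0 \<le> a" "0 < \<delta>"
  shows "\<exists>\<theta>. 0 \<le> \<theta> \<and> \<theta> < 1 \<and> (sqrt a - sqrt x)^2 - \<delta> \<le> \<theta> * x - a * \<theta> / (1 - \<theta>)"
proof (cases "a = 0")
  case True
  have x: "0 < x" using assms by linarith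
  have "x - \<delta> \<le> max 0 (1 - \<delta> / x) * x"
    using x by (cases "1 - \<delta> / x \<le> 0") (auto simp: field_simps)
  then show ?thesis
    using True x assms by (intro exI[of _ "max 0 (1 - \<delta> / x)"]) (simp add: power2_eq_square)
next
  case False
  then have "0 < a" "0 < x" using assms by simp_all
  moreover have "sqrt a < sqrt x" using assms by simp
  ultimately show ?thesis
    using tilt_gain_optimal[of x a] assms
    by (intro exI[of _ "1 - sqrt a / sqrt x"]) (simp add: field_simps)
qed

definition adapted_tilt ::
    "(real \<times> real \<Rightarrow> real) \<Rightarrow> (path2 \<Rightarrow> real \<Rightarrow> real) \<Rightarrow> real set \<Rightarrow> path2 set \<Rightarrow> real \<Rightarrow> real \<Rightarrow> real \<Rightarrow> real \<Rightarrow> bool"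
  where
  "adapted_tilt Rf c I F T \<delta> \<theta> \<kappa> \<longleftrightarrow> \<theta> < 1
     \<and> (\<forall>r. Rminus Rf I F T \<le> r \<and> r \<le> Rplus Rf I F T \<longrightarrow> 2 * r * (\<theta> / (1 - \<theta>)) \<le> \<kappa>)
     \<and> (\<forall>\<Delta>. cminus c (Sup I) F - cplus c (Inf I) F \<le> \<Delta> \<and> \<Delta> \<le> cplus c (Sup I) F - cminus c (Inf I) F
          \<longrightarrow> calE Rf c I F T - \<delta> \<le> \<theta> * \<Delta> - \<kappa> * (Sup I - Inf I))"

lemma exists_adapted_tilt:
  assumes "0 \<le> Rminus Rf I F T" "Rminus Rf I F T \<le> Rplus Rf I F T"
    and "0 \<le> cplus c (Sup I) F - cminus c (Inf I) F" "0 < Sup I - Inf I" "0 < \<delta>"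
  shows "\<exists>\<theta> \<kappa>. adapted_tilt Rf c I F T \<delta> \<theta> \<kappa>"
proof -
  define Rm where "Rm = Rminus Rf I F T"
  define Rp where "Rp = Rplus Rf I F T"
  define xm where "xm = cminus c (Sup I) F - cplus c (Inf I) F"
  define xp where "xp = cplus c (Sup I) F - cminus c (Inf I) F"
  define L where "L = Sup I - Inf I"
  have E: "calE Rf c I F T = (if 2 * Rm * L > xp then (sqrt (2 * Rm * L) - sqrt xp)^2
              else if xm > 2 * Rp * L then (sqrt (2 * Rp * L) - sqrt xm)^2 else 0)"
    unfolding calE_def Let_def Rm_def Rp_def xm_def xp_def L_def by simp
  have "0 \<le> Rm" "Rm \<le> Rp" "0 \<le> xp" "0 < L"
    using assms unfolding Rm_def Rp_def xp_def L_def by simp_all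
  consider "2 * Rm * L > xp" | "\<not> 2 * Rm * L > xp" "xm > 2 * Rp * L" | "\<not> 2 * Rm * L > xp" "\<not> xm > 2 * Rp * L"
    by blast
  then show ?thesis
  proof cases
    case 1
    then obtain \<theta> where \<theta>: "\<theta> \<le> 0" "(sqrt (2 * Rm * L) - sqrt xp)^2 - \<delta> \<le> \<theta> * xp - (2 * Rm * L) * \<theta> / (1 - \<theta>)"
      using exists_nonpos_tilt \<open>0 \<le> xp\<close> \<open>0 < \<delta>\<close> by blast
    have q: "\<theta> / (1 - \<theta>) \<le> 0" using \<theta> by (simp add: divide_nonpos_pos)
    have "2 * r * (\<theta> / (1 - \<theta>)) \<le> 2 * Rm * (\<theta> / (1 - \<theta>))" if "Rm \<le> r" for r
      using q that by (intro mult_right_mono_neg) auto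
    moreover have "\<theta> * xp \<le> \<theta> * \<Delta>" if "\<Delta> \<le> xp" for \<Delta>
      using that \<theta> by (intro mult_left_mono_neg) auto
    ultimately have "adapted_tilt Rf c I F T \<delta> \<theta> (2 * Rm * (\<theta> / (1 - \<theta>)))"
      unfolding adapted_tilt_def E Rm_def[symmetric] Rp_def[symmetric] xm_def[symmetric] xp_def[symmetric]
        L_def[symmetric]
      using 1 \<theta> by (force simp: algebra_simps)
    then show ?thesis by blast
  next
    case 2
    have "0 \<le> 2 * Rp * L" using \<open>0 \<le> Rm\<close> \<open>Rm \<le> Rp\<close> \<open>0 < L\<close> by simp
    then obtain \<theta> where \<theta>: "0 \<le> \<theta>" "\<theta> < 1"
      "(sqrt (2 * Rp * L) - sqrt xm)^2 - \<delta> \<le> \<theta> * xm - (2 * Rp * L) * \<theta> / (1 - \<theta>)"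
      using exists_nonneg_tilt 2 \<open>0 < \<delta>\<close> by blast
    have q: "0 \<le> \<theta> / (1 - \<theta>)" using \<theta> by simp
    have "2 * r * (\<theta> / (1 - \<theta>)) \<le> 2 * Rp * (\<theta> / (1 - \<theta>))" if "r \<le> Rp" for r
      using q that by (intro mult_right_mono) auto
    moreover have "\<theta> * xm \<le> \<theta> * \<Delta>" if "xm \<le> \<Delta>" for \<Delta>
      using that \<theta> by (intro mult_left_mono) auto
    ultimately have "adapted_tilt Rf c I F T \<delta> \<theta> (2 * Rp * (\<theta> / (1 - \<theta>)))"
      unfolding adapted_tilt_def E Rm_def[symmetric] Rp_def[symmetric] xm_def[symmetric] xp_def[symmetric]
        L_def[symmetric]
      using 2 \<theta> by (force simp: algebra_simps)
    then show ?thesis by blast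
  next
    case 3
    then have "adapted_tilt Rf c I F T \<delta> 0 0"
      unfolding adapted_tilt_def E Rm_def[symmetric] Rp_def[symmetric] xm_def[symmetric] xp_def[symmetric]
        L_def[symmetric]
      using \<open>0 < \<delta>\<close> by simp
    then show ?thesis by blast
  qed
qed

lemma chain_eq_jump_chain:
  assumes "\<And>k. 0 \<le> snd (fst (\<omega> k))"
  shows "chain z0 \<omega> m = jump_chain z0 \<omega> m"
  using assms by (induction m) (simp_all add: Let_def max_absorb2)

lemma proc_eq_jump_chain:
  assumes z0: "0 \<le> fst z0" "0 \<le> snd z0" and sizes: "\<And>k. 0 \<le> snd (fst (\<omega> k))"
  shows "proc z0 \<omega> t = jump_chain z0 \<omega> (jump_count (jump_time z0 0 \<omega>) t)"
proof -
  have "(rateR (chain z0 \<omega> k) \<le> 0 \<or> t < (\<Sum>j\<le>k. hold z0 \<omega> j)) \<longleftrightarrow> t < jump_time z0 0 \<omega> (Suc k)" for k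
  proof -
    have "1 \<le> rateR (chain z0 \<omega> k)"
      unfolding chain_eq_jump_chain[OF sizes] using jump_chain_nonneg[OF z0] rateR_ge_1 by blast
    moreover have "(\<Sum>j\<le>k. hold z0 \<omega> j) = jump_time z0 0 \<omega> (Suc k)"
      unfolding jump_time_def holding_time_def hold_def chain_eq_jump_chain[OF sizes] lessThan_Suc_atMost by simp
    ultimately show ?thesis by auto
  qed
  then show ?thesis
    unfolding proc_def jump_count_def chain_eq_jump_chain[OF sizes] by simp
qed

lemma proc_0:
  assumes "0 < fst (fst (\<omega> 0))"
  shows "proc z0 \<omega> 0 = z0"
proof -
  have "rateR (chain z0 \<omega> 0) \<le> 0 \<or> 0 < (\<Sum>j\<le>0. hold z0 \<omega> j)"
    using assms by (cases "rateR z0 \<le> 0") (auto simp: hold_def)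
  then have "(LEAST k. rateR (chain z0 \<omega> k) \<le> 0 \<or> 0 < (\<Sum>j\<le>k. hold z0 \<omega> j)) = 0"
    by (rule Least_eq_0)
  then show ?thesis unfolding proc_def by simp
qed

definition tube_bound :: "real \<Rightarrow> real \<Rightarrow> real" where
  "tube_bound M T = M * (1 + 2 * T powr (-2/3))"

lemma Gamma_bounds:
  assumes "g \<in> Gamma M T f n" "0 < M" "0 \<le> s" "s \<le> 1"
  shows "0 \<le> fst g s \<and> fst g s \<le> tube_bound M T \<and> 0 \<le> snd g s \<and> snd g s \<le> tube_bound M T"
proof -
  have G: "fst g \<in> G_set M T" "snd g \<in> G_set M T"
    using assms(1) unfolding Gamma_def by (auto simp: mem_Times_iff)
  then have "mono (fst g)" "mono (snd g)" "fst g 0 = 0" "snd g 0 = 0"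
    unfolding G_set_def E_space_def by blast+
  then have "0 \<le> fst g s" "0 \<le> snd g s"
    using monoD[of "fst g" 0 s] monoD[of "snd g" 0 s] assms(3) by auto
  moreover have "M * (s + 2 * T powr (-2/3)) \<le> tube_bound M T"
    unfolding tube_bound_def using assms(2-4) by (intro mult_left_mono) auto
  ultimately show ?thesis
    using G assms(3,4) unfolding G_set_def by force
qed

lemma Gamma_mono: "g \<in> Gamma M T f n \<Longrightarrow> mono (fst g) \<and> mono (snd g)"
  unfolding Gamma_def E2_def E_space_def by (auto simp: mem_Times_iff)

locale bounded_paths =
  fixes F :: "path2 set" and B :: real
  assumes bounds: "g \<in> F \<Longrightarrow> 0 \<le> s \<Longrightarrow> s \<le> 1 \<Longrightarrow> 0 \<le> fst g s \<and> fst g s \<le> B \<and> 0 \<le> snd g s \<and> snd g s \<le> B"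
begin

lemma rate_bounds:
  assumes "I \<subseteq> {0..1}" "0 \<le> T" "s \<in> I" "g \<in> F"
    and Rf: "\<And>z. 0 \<le> fst z \<Longrightarrow> 0 \<le> snd z \<Longrightarrow> 0 \<le> Rf z \<and> Rf z \<le> fst z + snd z + 1"
  shows "0 \<le> Rf (T *\<^sub>R evalp g s) \<and> Rf (T *\<^sub>R evalp g s) \<le> 2 * T * B + 1"
proof -
  have "0 \<le> fst g s" "fst g s \<le> B" "0 \<le> snd g s" "snd g s \<le> B"
    using bounds[OF assms(4)] assms(1,3) by auto
  then have "0 \<le> T * fst g s" "T * fst g s \<le> T * B" "0 \<le> T * snd g s" "T * snd g s \<le> T * B"
    using assms(2) by (auto intro: mult_left_mono)
  then show ?thesis
    using Rf[of "T *\<^sub>R evalp g s"] by (simp add: evalp_def)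
qed

lemma Rminus_Rplus_between:
  assumes "I \<subseteq> {0..1}" "0 \<le> T" "s \<in> I" "g \<in> F"
    and Rf: "\<And>z. 0 \<le> fst z \<Longrightarrow> 0 \<le> snd z \<Longrightarrow> 0 \<le> Rf z \<and> Rf z \<le> fst z + snd z + 1"
  shows "Rminus Rf I F T \<le> Rf (T *\<^sub>R evalp g s) \<and> Rf (T *\<^sub>R evalp g s) \<le> Rplus Rf I F T"
proof -
  let ?R = "{Rf (T *\<^sub>R evalp g s) | s g. s \<in> I \<and> g \<in> F}"
  have "bdd_below ?R" "bdd_above ?R"
    using rate_bounds[OF assms(1,2) _ _ Rf] by (force intro: bdd_belowI bdd_aboveI)+
  moreover have "Rf (T *\<^sub>R evalp g s) \<in> ?R" using assms(3,4) by blast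
  ultimately show ?thesis
    unfolding Rminus_def Rplus_def by (auto intro: cInf_lower cSup_upper)
qed

lemma Rminus_nonneg:
  assumes "I \<subseteq> {0..1}" "0 \<le> T" "I \<noteq> {}" "F \<noteq> {}"
    and Rf: "\<And>z. 0 \<le> fst z \<Longrightarrow> 0 \<le> snd z \<Longrightarrow> 0 \<le> Rf z \<and> Rf z \<le> fst z + snd z + 1"
  shows "0 \<le> Rminus Rf I F T"
  unfolding Rminus_def using rate_bounds[OF assms(1,2) _ _ Rf] assms(3,4) by (auto intro!: cInf_greatest)

lemma cminus_cplus_between:
  assumes "0 \<le> s" "s \<le> 1" "c = fst \<or> c = snd" "g \<in> F"
  shows "cminus c s F \<le> c g s \<and> c g s \<le> cplus c s F"
proof -
  have "bdd_below {c g s | g. g \<in> F}" "bdd_above {c g s | g. g \<in> F}"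
    using bounds[OF _ assms(1,2)] assms(3) by (force intro: bdd_belowI bdd_aboveI)+
  moreover have "c g s \<in> {c g s | g. g \<in> F}" using assms(4) by blast
  ultimately show ?thesis
    unfolding cminus_def cplus_def by (auto intro: cInf_lower cSup_upper)
qed

end

lemma bounded_paths_Gamma: "0 < M \<Longrightarrow> bounded_paths (Gamma M T f n) (tube_bound M T)"
  using Gamma_bounds by unfold_locales blast

lemma Ij_props:
  assumes "0 < n" "Suc j \<le> n"
  shows "Ij n j \<subseteq> {0..1}" "Inf (Ij n j) = real j / real n" "Sup (Ij n j) = real (Suc j) / real n"
proof -
  have "real j / real n \<le> real (Suc j) / real n" "real (Suc j) / real n \<le> 1"
    using assms by (simp_all add: divide_right_mono)
  then show "Ij n j \<subseteq> {0..1}" "Inf (Ij n j) = real j / real n" "Sup (Ij n j) = real (Suc j) / real n"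
    unfolding Ij_def by auto
qed

section \<open>The large deviation bound\<close>

lemma outer_prob_le_measure:
  assumes "A \<subseteq> B" "B \<in> sets M"
  shows "outer_prob M A \<le> measure M B"
  unfolding outer_prob_def using assms by (intro cInf_lower bdd_belowI[of _ 0]) auto

lemma emeasure_Markov_le_1:
  assumes "0 < c" "u \<in> borel_measurable M" "(\<integral>\<^sup>+x. ennreal (u x) \<partial>M) \<le> 1"
  shows "emeasure M {x \<in> space M. c \<le> u x} \<le> ennreal (1 / c)"
proof -
  have "emeasure M {x \<in> space M. c \<le> u x} = (\<integral>\<^sup>+x. indicator {x \<in> space M. c \<le> u x} x \<partial>M)"
    using assms(2) by simp
  also have "\<dots> \<le> (\<integral>\<^sup>+x. ennreal (1 / c) * ennreal (u x) \<partial>M)"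
    using assms(1) by (intro nn_integral_mono)
      (auto simp: ennreal_mult'[symmetric] field_simps split: split_indicator)
  also have "\<dots> = ennreal (1 / c) * (\<integral>\<^sup>+x. ennreal (u x) \<partial>M)"
    using assms(2) by (simp add: nn_integral_cmult)
  also have "\<dots> \<le> ennreal (1 / c)"
    using mult_left_mono[OF assms(3), of "ennreal (1 / c)"] by simp
  finally show ?thesis .
qed

lemma le_of_le_mult_exp:
  fixes x y :: real
  assumes "0 < y" "\<And>\<epsilon>. 0 < \<epsilon> \<Longrightarrow> x \<le> y * exp \<epsilon>"
  shows "x \<le> y"
proof (rule field_le_epsilon)
  fix e :: real
  assume "0 < e"
  then have "x \<le> y * exp (ln (1 + e / y))"
    using assms by (intro assms(2)) (simp add: ln_gt_zero)
  also have "\<dots> = y + e"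
    using \<open>0 < e\<close> assms(1) by (simp add: field_simps)
  finally show "x \<le> y + e" .
qed

text \<open>
  The process runs from time \<open>i / n\<close> to \<open>K / n\<close> of the rescaled clock, i.e. through the
  \<open>N = K - i\<close> blocks of length \<open>d = T / n\<close> of its own clock; block l corresponds to \<open>Ij n (i + l)\<close>.
\<close>
locale tube_setting =
  fixes M T :: real and f :: path2 and n i K :: nat and \<theta> :: real and z :: "real \<times> real"
  assumes M_pos: "0 < M" and T_pos: "0 < T" and i_less_K: "i < K" and K_le_n: "K \<le> n"
    and K_le_\<theta>: "real K / real n \<le> \<theta>"
begin

abbreviation \<Gamma> :: "path2 set" where
  "\<Gamma> \<equiv> Gamma M T f n"

abbreviation N :: nat where
  "N \<equiv> K - i"

definition d :: real where
  "d = T / real n"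

definition path_event :: "omega set" where
  "path_event = {\<omega> \<in> space Q_meas.
     restr_in (\<lambda>s. (1 / T) *\<^sub>R proc (T *\<^sub>R z) \<omega> (s * T - (real i / real n) * T)) \<Gamma> {real i / real n .. \<theta>}}"

definition rate_sum :: real where
  "rate_sum = (\<Sum>j = i..<K. calE_X (Ij n j) \<Gamma> T + calE_Y (Ij n j) \<Gamma> T)"

definition good_jumps :: "omega set" where
  "good_jumps = {\<omega> \<in> space Q_meas. \<forall>k. 0 < fst (fst (\<omega> k)) \<and> 0 < snd (fst (\<omega> k))}"

definition chain_follows :: "omega \<Rightarrow> path2 \<Rightarrow> bool" where
  "chain_follows \<omega> g \<longleftrightarrow> (\<forall>t. 0 \<le> t \<and> t \<le> real N * d \<longrightarrow>
     jump_chain (T *\<^sub>R z) \<omega> (jump_count (jump_time (T *\<^sub>R z) 0 \<omega>) t) = T *\<^sub>R evalp g (real i / real n + t / T))"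

definition bounded_jumps :: "omega set" where
  "bounded_jumps = {\<omega> \<in> space Q_meas. \<forall>k. (\<Sum>m<k. max 0 (snd (fst (\<omega> m)))) \<le> 2 * T * tube_bound M T}"

sublocale bounded_paths \<Gamma> "tube_bound M T"
  by (rule bounded_paths_Gamma[OF M_pos])

lemma n_pos: "0 < n"
  using i_less_K K_le_n by linarith

lemma d_pos: "0 < d"
  unfolding d_def using T_pos n_pos by simp

lemma block_le_n: "l < N \<Longrightarrow> Suc (i + l) \<le> n"
  using K_le_n by linarith

lemma time_in_block:
  assumes "real l * d \<le> t" "t \<le> real (Suc l) * d"
  shows "real i / real n + t / T \<in> Ij n (i + l)"
proof -
  have "real (i + l) / real n = real i / real n + real l * d / T"
    "real (Suc (i + l)) / real n = real i / real n + real (Suc l) * d / T"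
    unfolding d_def using T_pos n_pos by (simp_all add: field_simps)
  moreover have "real l * d / T \<le> t / T" "t / T \<le> real (Suc l) * d / T"
    using assms T_pos by (simp_all add: divide_right_mono)
  ultimately show ?thesis unfolding Ij_def by simp
qed

lemma time_le_end:
  assumes "t \<le> real N * d"
  shows "real i / real n + t / T \<le> real K / real n"
proof -
  have "t / T \<le> real N / real n" using assms T_pos unfolding d_def by (simp add: divide_simps)
  moreover have "real i / real n + real N / real n = real K / real n"
    using i_less_K by (simp add: of_nat_diff flip: add_divide_distrib)
  ultimately show ?thesis by linarith
qed

lemma rate_sum_eq: "rate_sum = (\<Sum>l<N. calE_X (Ij n (i + l)) \<Gamma> T + calE_Y (Ij n (i + l)) \<Gamma> T)"
  unfolding rate_sum_def using i_less_K
  by (simp add: sum.atLeastLessThan_shift_0[of _ i K] atLeast0LessThan add.commute)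

lemma sets_good_jumps [measurable]: "good_jumps \<in> sets Q_meas"
  unfolding good_jumps_def by measurable

lemma sets_bounded_jumps [measurable]: "bounded_jumps \<in> sets Q_meas"
  unfolding bounded_jumps_def by measurable

lemma emeasure_bounded_jumps: "emeasure Q_meas bounded_jumps = 0"
  unfolding bounded_jumps_def by (rule emeasure_bounded_jump_sizes_eq_0)

lemma emeasure_not_good_jumps: "emeasure Q_meas (space Q_meas - good_jumps) = 0"
proof -
  have "space Q_meas - good_jumps
      = {\<omega> \<in> space Q_meas. \<not> (\<forall>k. 0 < fst (fst (\<omega> k)) \<and> 0 < snd (fst (\<omega> k)))}"
    unfolding good_jumps_def by auto
  then show ?thesis
    using AE_Q_meas_jumps_pos by (simp add: AE_iff_measurable[OF _ refl])
qed

lemma path_event_sample_path: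
  assumes "\<omega> \<in> path_event" "\<omega> \<in> good_jumps"
  obtains g where "g \<in> \<Gamma>" "0 \<le> fst z" "0 \<le> snd z" "chain_follows \<omega> g"
proof -
  obtain g where g: "g \<in> \<Gamma>"
    and on_path: "\<And>s. s \<in> {real i / real n..\<theta>} \<Longrightarrow> evalp g s = (1 / T) *\<^sub>R proc (T *\<^sub>R z) \<omega> (s * T - real i / real n * T)"
    using assms(1) unfolding path_event_def restr_in_def by auto
  have pos: "\<And>k. 0 < fst (fst (\<omega> k))" "\<And>k. 0 \<le> snd (fst (\<omega> k))"
    using assms(2) unfolding good_jumps_def by (auto intro: less_imp_le)
  have i_le_K: "real i / real n \<le> real K / real n"
    using i_less_K by (simp add: divide_right_mono)
  then have "z = evalp g (real i / real n)"
    using on_path[of "real i / real n"] K_le_\<theta> T_pos by (simp add: proc_0[OF pos(1)])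
  moreover have "real K / real n \<le> 1" using K_le_n n_pos by simp
  ultimately have z: "0 \<le> fst z" "0 \<le> snd z"
    using bounds[OF g, of "real i / real n"] i_le_K by (auto simp: evalp_def)
  then have Tz: "0 \<le> fst (T *\<^sub>R z)" "0 \<le> snd (T *\<^sub>R z)"
    using T_pos by simp_all
  have "jump_chain (T *\<^sub>R z) \<omega> (jump_count (jump_time (T *\<^sub>R z) 0 \<omega>) t) = T *\<^sub>R evalp g (real i / real n + t / T)"
    if t: "0 \<le> t" "t \<le> real N * d" for t
  proof -
    define s where "s = real i / real n + t / T"
    have "s \<le> real K / real n" unfolding s_def using time_le_end[OF t(2)] .
    then have "s \<in> {real i / real n..\<theta>}" unfolding s_def using t T_pos K_le_\<theta> by auto
    moreover have "s * T - real i / real n * T = t" unfolding s_def using T_pos by (simp add: field_simps)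
    ultimately show ?thesis
      using on_path[of s] T_pos proc_eq_jump_chain[OF Tz pos(2)] unfolding s_def by simp
  qed
  then show ?thesis using that g z unfolding chain_follows_def by blast
qed

lemma chain_follows_block_start:
  assumes "chain_follows \<omega> g" "l \<le> N"
  shows "jump_chain (T *\<^sub>R z) \<omega> (jump_count (jump_time (T *\<^sub>R z) 0 \<omega>) (real l * d))
    = T *\<^sub>R evalp g (real (i + l) / real n)"
proof -
  have "real l * d \<le> real N * d" using assms(2) d_pos by (intro mult_right_mono) auto
  moreover have "real i / real n + real l * d / T = real (i + l) / real n"
    unfolding d_def using T_pos n_pos by (simp add: field_simps)
  ultimately show ?thesis
    using assms(1) d_pos unfolding chain_follows_def by simp
qed

lemma path_event_slow_jump_sizes_bounded:
  assumes "\<omega> \<in> path_event" "\<omega> \<in> good_jumps" "\<And>k. jump_time (T *\<^sub>R z) 0 \<omega> k \<le> real N * d"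
  shows "(\<Sum>m<k. max 0 (snd (fst (\<omega> m)))) \<le> 2 * T * tube_bound M T"
proof -
  obtain g where g: "g \<in> \<Gamma>" "0 \<le> fst z" "0 \<le> snd z" "chain_follows \<omega> g"
    using path_event_sample_path[OF assms(1,2)] by blast
  define S where "S = jump_time (T *\<^sub>R z) 0 \<omega>"
  have S: "strict_mono S"
    unfolding S_def using g(2,3) T_pos assms(2)
    by (intro strict_mono_jump_time) (auto simp: good_jumps_def)
  have "0 \<le> S k" using strict_mono_less_eq[OF S, of 0 k] unfolding S_def jump_time_def by simp
  moreover have "jump_count S (S k) = k" using S by (intro jump_count_eq) (auto simp: strict_mono_Suc_iff)
  ultimately have chain_k: "jump_chain (T *\<^sub>R z) \<omega> k = T *\<^sub>R evalp g (real i / real n + S k / T)"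
    using g(4) assms(3) unfolding S_def chain_follows_def by metis
  define s where "s = real i / real n + S k / T"
  have "s \<le> real K / real n" unfolding s_def S_def using time_le_end[OF assms(3)] .
  moreover have "real K / real n \<le> 1" using K_le_n n_pos by simp
  moreover have "0 \<le> s" unfolding s_def using \<open>0 \<le> S k\<close> T_pos by simp
  ultimately have "fst g s \<le> tube_bound M T" "snd g s \<le> tube_bound M T"
    using bounds[OF g(1), of s] by auto
  then have "fst (jump_chain (T *\<^sub>R z) \<omega> k) + snd (jump_chain (T *\<^sub>R z) \<omega> k) \<le> 2 * T * tube_bound M T"
    unfolding chain_k s_def[symmetric] using T_pos by (simp add: evalp_def mult_left_mono flip: distrib_left)
  moreover have "0 \<le> T * fst z" "0 \<le> T * snd z" using g(2,3) T_pos by simp_all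
  ultimately show ?thesis
    unfolding jump_chain_sum by simp
qed

lemma exists_adapted_tilts:
  assumes "\<Gamma> \<noteq> {}" "0 < \<delta>"
  obtains \<theta>x \<theta>y \<kappa>x \<kappa>y :: "nat \<Rightarrow> real" where
    "\<And>l. l < N \<Longrightarrow> adapted_tilt rateRX fst (Ij n (i + l)) \<Gamma> T \<delta> (\<theta>x l) (\<kappa>x l)"
    "\<And>l. l < N \<Longrightarrow> adapted_tilt rateRY snd (Ij n (i + l)) \<Gamma> T \<delta> (\<theta>y l) (\<kappa>y l)"
    "\<And>l. \<theta>x l < 1" "\<And>l. \<theta>y l < 1"
proof -
  obtain g where g: "g \<in> \<Gamma>" using assms(1) by blast
  have block_tilt: "\<exists>\<theta> \<kappa>. \<theta> < 1 \<and> (l < N \<longrightarrow> adapted_tilt Rf c (Ij n (i + l)) \<Gamma> T \<delta> \<theta> \<kappa>)"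
    if Rf: "\<And>z. 0 \<le> fst z \<Longrightarrow> 0 \<le> snd z \<Longrightarrow> 0 \<le> Rf z \<and> Rf z \<le> fst z + snd z + 1"
      and c: "c = fst \<or> c = snd" for Rf c l
  proof (cases "l < N")
    case True
    define a where "a = real (i + l) / real n"
    define b where "b = real (Suc (i + l)) / real n"
    note I = Ij_props[OF n_pos block_le_n[OF True]]
    have ab: "0 \<le> a" "a \<le> b" "b \<le> 1" "a \<in> Ij n (i + l)"
      using I n_pos unfolding a_def b_def Ij_def by (auto simp: divide_right_mono)
    have "0 \<le> Rminus Rf (Ij n (i + l)) \<Gamma> T"
      using I(1) ab(4) T_pos assms(1) by (intro Rminus_nonneg Rf) auto
    moreover have "Rminus Rf (Ij n (i + l)) \<Gamma> T \<le> Rplus Rf (Ij n (i + l)) \<Gamma> T"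
      using Rminus_Rplus_between[OF I(1) less_imp_le[OF T_pos] ab(4) g Rf] by linarith
    moreover have "cminus c a \<Gamma> \<le> c g a" "c g b \<le> cplus c b \<Gamma>"
      using cminus_cplus_between[OF _ _ c g] ab by auto
    moreover have "c g a \<le> c g b"
      using Gamma_mono[OF g] c ab(2) by (auto dest: monoD)
    moreover have "0 < Sup (Ij n (i + l)) - Inf (Ij n (i + l))"
      unfolding I(2,3) using n_pos by (simp add: field_simps)
    ultimately obtain \<theta> \<kappa> where "adapted_tilt Rf c (Ij n (i + l)) \<Gamma> T \<delta> \<theta> \<kappa>"
      using exists_adapted_tilt[of Rf "Ij n (i + l)" \<Gamma> T c \<delta>] assms(2) unfolding I(2,3) a_def b_def by force
    then show ?thesis unfolding adapted_tilt_def by blast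
  qed (intro exI[of _ 0]; simp)
  obtain \<theta>x \<kappa>x where X: "\<And>l. \<theta>x l < 1 \<and> (l < N \<longrightarrow> adapted_tilt rateRX fst (Ij n (i + l)) \<Gamma> T \<delta> (\<theta>x l) (\<kappa>x l))"
    using block_tilt[OF rateRX_bounds] by metis
  obtain \<theta>y \<kappa>y where Y: "\<And>l. \<theta>y l < 1 \<and> (l < N \<longrightarrow> adapted_tilt rateRY snd (Ij n (i + l)) \<Gamma> T \<delta> (\<theta>y l) (\<kappa>y l))"
    using block_tilt[OF rateRY_bounds] by metis
  show ?thesis using that X Y by blast
qed

end

lemma (in tube_setting) adapted_tilt_gain:
  assumes "adapted_tilt Rf c (Ij n (i + l)) \<Gamma> T \<delta> \<theta>' \<kappa>" "l < N" "g \<in> \<Gamma>" "c = fst \<or> c = snd"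
  defines "a \<equiv> real (i + l) / real n" and "b \<equiv> real (Suc (i + l)) / real n"
  shows "calE Rf c (Ij n (i + l)) \<Gamma> T - \<delta> \<le> \<theta>' * (c g b - c g a) - \<kappa> / real n"
proof -
  note I = Ij_props[OF n_pos block_le_n[OF assms(2)]]
  have ab: "0 \<le> a" "a \<le> 1" "0 \<le> b" "b \<le> 1"
    using I(1) n_pos block_le_n[OF assms(2)] unfolding a_def b_def by auto
  have "b - a = 1 / real n"
    unfolding a_def b_def using n_pos by (simp add: field_simps)
  moreover have "cminus c b \<Gamma> - cplus c a \<Gamma> \<le> c g b - c g a" "c g b - c g a \<le> cplus c b \<Gamma> - cminus c a \<Gamma>"
    using cminus_cplus_between[OF ab(1,2) assms(4,3)] cminus_cplus_between[OF ab(3,4) assms(4,3)] by auto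
  ultimately show ?thesis
    using assms(1) unfolding adapted_tilt_def I(2,3) a_def[symmetric] b_def[symmetric] by auto
qed

locale tilted_tube = tube_setting +
  fixes \<theta>x \<theta>y \<kappa>x \<kappa>y :: "nat \<Rightarrow> real" and \<delta> :: real
  assumes adapted_X: "\<And>l. l < N \<Longrightarrow> adapted_tilt rateRX fst (Ij n (i + l)) \<Gamma> T \<delta> (\<theta>x l) (\<kappa>x l)"
    and adapted_Y: "\<And>l. l < N \<Longrightarrow> adapted_tilt rateRY snd (Ij n (i + l)) \<Gamma> T \<delta> (\<theta>y l) (\<kappa>y l)"
    and \<theta>x_lt_1: "\<And>l. \<theta>x l < 1" and \<theta>y_lt_1: "\<And>l. \<theta>y l < 1"
    and z_nonneg: "0 \<le> fst z" "0 \<le> snd z"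
begin

sublocale tilt_schedule d N \<theta>x \<theta>y
  using d_pos \<theta>x_lt_1 \<theta>y_lt_1 by unfold_locales

lemma compensator_rate_tube_le:
  assumes "l < N" "g \<in> \<Gamma>" "s \<in> Ij n (i + l)"
  shows "compensator_rate (T *\<^sub>R evalp g s) l \<le> \<kappa>x l + \<kappa>y l"
proof -
  note I = Ij_props[OF n_pos block_le_n[OF assms(1)]]
  have "2 * rateRX (T *\<^sub>R evalp g s) * (\<theta>x l / (1 - \<theta>x l)) \<le> \<kappa>x l"
    using Rminus_Rplus_between[OF I(1) less_imp_le[OF T_pos] assms(3,2) rateRX_bounds] adapted_X[OF assms(1)]
    unfolding adapted_tilt_def by blast
  moreover have "2 * rateRY (T *\<^sub>R evalp g s) * (\<theta>y l / (1 - \<theta>y l)) \<le> \<kappa>y l"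
    using Rminus_Rplus_between[OF I(1) less_imp_le[OF T_pos] assms(3,2) rateRY_bounds] adapted_Y[OF assms(1)]
    unfolding adapted_tilt_def by blast
  ultimately show ?thesis unfolding compensator_rate_def by linarith
qed

lemma block_gain_ge:
  assumes "l < N" "g \<in> \<Gamma>"
  defines "a \<equiv> real (i + l) / real n" and "b \<equiv> real (Suc (i + l)) / real n"
  shows "T * (calE_X (Ij n (i + l)) \<Gamma> T + calE_Y (Ij n (i + l)) \<Gamma> T) - 2 * T * \<delta>
     \<le> \<theta>x l * (T * fst g b - T * fst g a) + \<theta>y l * (T * snd g b - T * snd g a) - (\<kappa>x l + \<kappa>y l) * d"
proof -
  have "T * ((calE_X (Ij n (i + l)) \<Gamma> T - \<delta>) + (calE_Y (Ij n (i + l)) \<Gamma> T - \<delta>))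
      \<le> T * ((\<theta>x l * (fst g b - fst g a) - \<kappa>x l / real n) + (\<theta>y l * (snd g b - snd g a) - \<kappa>y l / real n))"
    using adapted_tilt_gain[OF adapted_X[OF assms(1)] assms(1,2) disjI1[OF refl]]
      adapted_tilt_gain[OF adapted_Y[OF assms(1)] assms(1,2) disjI2[OF refl]]
      T_pos unfolding calE_X_def calE_Y_def a_def b_def by (intro mult_left_mono) auto
  then show ?thesis
    unfolding d_def by (simp add: algebra_simps)
qed

lemma rate_sum_le_tilted_increments:
  assumes "g \<in> \<Gamma>"
  shows "T * rate_sum - 2 * T * real N * \<delta>
      \<le> (\<Sum>l<N. \<theta>x l * (T * fst g (real (Suc (i + l)) / real n) - T * fst g (real (i + l) / real n))
             + \<theta>y l * (T * snd g (real (Suc (i + l)) / real n) - T * snd g (real (i + l) / real n))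
             - (\<kappa>x l + \<kappa>y l) * d)"
proof -
  have "T * rate_sum - 2 * T * real N * \<delta>
      = (\<Sum>l<N. T * (calE_X (Ij n (i + l)) \<Gamma> T + calE_Y (Ij n (i + l)) \<Gamma> T) - 2 * T * \<delta>)"
    unfolding rate_sum_eq by (simp add: sum_subtractf sum_distrib_left)
  also have "\<dots> \<le> (\<Sum>l<N. \<theta>x l * (T * fst g (real (Suc (i + l)) / real n) - T * fst g (real (i + l) / real n))
             + \<theta>y l * (T * snd g (real (Suc (i + l)) / real n) - T * snd g (real (i + l) / real n))
             - (\<kappa>x l + \<kappa>y l) * d)"
    using block_gain_ge[OF _ assms] by (intro sum_mono) simp
  finally show ?thesis .
qed

lemma compensator_rate_along_chain_le:
  assumes "chain_follows \<omega> g" "g \<in> \<Gamma>" "strict_mono (jump_time (T *\<^sub>R z) 0 \<omega>)" "l < N"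
    and "0 < overlap (jump_time (T *\<^sub>R z) 0 \<omega> m) (jump_time (T *\<^sub>R z) 0 \<omega> (Suc m)) (real l * d) (real (Suc l) * d)"
  shows "compensator_rate (jump_chain (T *\<^sub>R z) \<omega> m) l \<le> \<kappa>x l + \<kappa>y l"
proof -
  obtain t where t: "jump_time (T *\<^sub>R z) 0 \<omega> m \<le> t" "t < jump_time (T *\<^sub>R z) 0 \<omega> (Suc m)"
    "real l * d \<le> t" "t \<le> real (Suc l) * d"
    using overlap_pos_obtain[OF assms(5)] .
  have "0 \<le> real l * d" using d_pos by simp
  then have "0 \<le> t" using t(3) by linarith
  moreover have "real (Suc l) * d \<le> real N * d" using assms(4) d_pos by (intro mult_right_mono) auto
  then have "t \<le> real N * d" using t(4) by linarith
  ultimately have "jump_chain (T *\<^sub>R z) \<omega> m = T *\<^sub>R evalp g (real i / real n + t / T)"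
    using assms(1) jump_count_eq[OF assms(3) t(1,2)] unfolding chain_follows_def by metis
  then show ?thesis
    using compensator_rate_tube_le[OF assms(4,2) time_in_block[OF t(3,4)]] by simp
qed

lemma tilt_weight_ge:
  assumes "\<omega> \<in> path_event" "\<omega> \<in> good_jumps" "real N * d < jump_time (T *\<^sub>R z) 0 \<omega> (Suc k)"
  shows "exp (T * rate_sum - 2 * T * real N * \<delta>) \<le> tilt_weight (Suc k) (T *\<^sub>R z) 0 \<omega>"
proof -
  obtain g where g: "g \<in> \<Gamma>" "chain_follows \<omega> g"
    using path_event_sample_path[OF assms(1,2)] by blast
  define S where "S = jump_time (T *\<^sub>R z) 0 \<omega>"
  define c where "c = jump_chain (T *\<^sub>R z) \<omega>"
  have S: "strict_mono S" "S 0 = 0"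
    unfolding S_def using z_nonneg T_pos assms(2)
    by (auto intro!: strict_mono_jump_time simp: good_jumps_def jump_time_def)
  have \<kappa>: "compensator_rate (c m) l \<le> \<kappa>x l + \<kappa>y l"
    if "l < N" "0 < overlap (S m) (S (Suc m)) (real l * d) (real (Suc l) * d)" for l m
    using compensator_rate_along_chain_le[OF g(2,1) S(1)[unfolded S_def] that[unfolded S_def]]
    unfolding c_def .
  have "T * rate_sum - 2 * T * real N * \<delta>
      \<le> (\<Sum>l<N. \<theta>x l * (T * fst g (real (Suc (i + l)) / real n) - T * fst g (real (i + l) / real n))
             + \<theta>y l * (T * snd g (real (Suc (i + l)) / real n) - T * snd g (real (i + l) / real n))
             - (\<kappa>x l + \<kappa>y l) * d)"
    by (rule rate_sum_le_tilted_increments[OF g(1)])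
  also have "\<dots> = (\<Sum>l<N. \<theta>x l * (fst (c (jump_count S (real (Suc l) * d))) - fst (c (jump_count S (real l * d))))
               + \<theta>y l * (snd (c (jump_count S (real (Suc l) * d))) - snd (c (jump_count S (real l * d))))
               - (\<kappa>x l + \<kappa>y l) * d)"
  proof (intro sum.cong refl)
    fix l assume "l \<in> {..<N}"
    then show "\<theta>x l * (T * fst g (real (Suc (i + l)) / real n) - T * fst g (real (i + l) / real n))
             + \<theta>y l * (T * snd g (real (Suc (i + l)) / real n) - T * snd g (real (i + l) / real n))
             - (\<kappa>x l + \<kappa>y l) * d
        = \<theta>x l * (fst (c (jump_count S (real (Suc l) * d))) - fst (c (jump_count S (real l * d))))
               + \<theta>y l * (snd (c (jump_count S (real (Suc l) * d))) - snd (c (jump_count S (real l * d))))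
               - (\<kappa>x l + \<kappa>y l) * d"
      using chain_follows_block_start[OF g(2), of l] chain_follows_block_start[OF g(2), of "Suc l"]
      unfolding c_def S_def by (simp add: evalp_def)
  qed
  also have "\<dots> \<le> (\<Sum>m<Suc k. tilt_increment (T *\<^sub>R z) 0 \<omega> m)"
    unfolding tilt_increment_def S_def[symmetric] c_def[symmetric]
    by (rule sum_tilt_increments_ge[OF S assms(3)[folded S_def]]) (simp add: c_def, blast intro: \<kappa>)
  finally show ?thesis
    unfolding tilt_weight_def by simp
qed

lemma tilt_weight_eventually_ge:
  assumes "\<omega> \<in> path_event" "\<omega> \<in> good_jumps" "real N * d < jump_time (T *\<^sub>R z) 0 \<omega> (Suc k)" "Suc k \<le> k'"
  shows "exp (T * rate_sum - 2 * T * real N * \<delta>) \<le> tilt_weight k' (T *\<^sub>R z) 0 \<omega>"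
proof -
  have S: "strict_mono (jump_time (T *\<^sub>R z) 0 \<omega>)"
    using z_nonneg T_pos assms(2) by (auto intro!: strict_mono_jump_time simp: good_jumps_def)
  have "tilt_increment (T *\<^sub>R z) 0 \<omega> m = 0" if "Suc k \<le> m" for m
    using assms(3) strict_mono_less_eq[OF S, of "Suc k" m] that by (intro tilt_increment_eq_0[OF S]) auto
  then have "(\<Sum>m<k'. tilt_increment (T *\<^sub>R z) 0 \<omega> m) = (\<Sum>m<Suc k. tilt_increment (T *\<^sub>R z) 0 \<omega> m)"
    using assms(4) by (intro sum.mono_neutral_right) auto
  then show ?thesis using tilt_weight_ge[OF assms(1-3)] unfolding tilt_weight_def by simp
qed

definition heavy_weight :: "nat \<Rightarrow> omega set" where
  "heavy_weight k0 = {\<omega> \<in> space Q_meas. \<forall>k\<ge>k0. exp (T * rate_sum - 2 * T * real N * \<delta>) \<le> tilt_weight k (T *\<^sub>R z) 0 \<omega>}"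

lemma sets_heavy_weight [measurable]: "heavy_weight k0 \<in> sets Q_meas"
  unfolding heavy_weight_def by measurable

lemma path_event_subset:
  "path_event \<subseteq> (space Q_meas - good_jumps) \<union> bounded_jumps \<union> (\<Union>k0. heavy_weight k0)"
proof
  fix \<omega> assume \<omega>: "\<omega> \<in> path_event"
  then have "\<omega> \<in> space Q_meas" unfolding path_event_def by simp
  show "\<omega> \<in> (space Q_meas - good_jumps) \<union> bounded_jumps \<union> (\<Union>k0. heavy_weight k0)"
  proof (cases "\<omega> \<in> good_jumps")
    case good: True
    show ?thesis
    proof (cases "\<exists>k. real N * d < jump_time (T *\<^sub>R z) 0 \<omega> k")
      case True
      then obtain k where k: "real N * d < jump_time (T *\<^sub>R z) 0 \<omega> k" by blast
      moreover have "0 \<le> real N * d" using d_pos by simp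
      ultimately obtain k0 where "k = Suc k0" by (cases k) (auto simp: jump_time_def)
      then have "\<omega> \<in> heavy_weight (Suc k0)"
        using tilt_weight_eventually_ge[OF \<omega> good] k \<open>\<omega> \<in> space Q_meas\<close> unfolding heavy_weight_def by blast
      then show ?thesis by blast
    next
      case False
      then have "\<omega> \<in> bounded_jumps"
        using path_event_slow_jump_sizes_bounded[OF \<omega> good] \<open>\<omega> \<in> space Q_meas\<close>
        unfolding bounded_jumps_def by (simp add: not_less)
      then show ?thesis by blast
    qed
  qed (use \<open>\<omega> \<in> space Q_meas\<close> in blast)
qed

lemma emeasure_heavy_weight_le: "emeasure Q_meas (\<Union>k0. heavy_weight k0) \<le> ennreal (exp (- (T * rate_sum - 2 * T * real N * \<delta>)))"
proof -
  have "emeasure Q_meas (\<Union>k0. heavy_weight k0) = (SUP k0. emeasure Q_meas (heavy_weight k0))"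
    by (intro SUP_emeasure_incseq[symmetric]) (auto simp: incseq_def heavy_weight_def)
  also have "\<dots> \<le> ennreal (1 / exp (T * rate_sum - 2 * T * real N * \<delta>))"
  proof (intro SUP_least)
    fix k0
    have "emeasure Q_meas (heavy_weight k0)
        \<le> emeasure Q_meas {\<omega> \<in> space Q_meas. exp (T * rate_sum - 2 * T * real N * \<delta>) \<le> tilt_weight k0 (T *\<^sub>R z) 0 \<omega>}"
      by (intro emeasure_mono) (auto simp: heavy_weight_def)
    also have "\<dots> \<le> ennreal (1 / exp (T * rate_sum - 2 * T * real N * \<delta>))"
      using z_nonneg T_pos by (intro emeasure_Markov_le_1 nn_integral_tilt_weight_le_1) auto
    finally show "emeasure Q_meas (heavy_weight k0) \<le> ennreal (1 / exp (T * rate_sum - 2 * T * real N * \<delta>))" .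
  qed
  finally show ?thesis
    by (metis exp_minus inverse_eq_divide)
qed

lemma outer_prob_path_event_le_tilted:
  "outer_prob Q_meas path_event \<le> exp (- (T * rate_sum - 2 * T * real N * \<delta>))"
proof -
  have "outer_prob Q_meas path_event
      \<le> measure Q_meas ((space Q_meas - good_jumps) \<union> bounded_jumps \<union> (\<Union>k0. heavy_weight k0))"
    using path_event_subset by (intro outer_prob_le_measure) measurable
  also have "\<dots> \<le> exp (- (T * rate_sum - 2 * T * real N * \<delta>))"
  proof -
    have "emeasure Q_meas ((space Q_meas - good_jumps) \<union> bounded_jumps \<union> (\<Union>k0. heavy_weight k0))
        \<le> emeasure Q_meas (space Q_meas - good_jumps) + emeasure Q_meas bounded_jumps
          + emeasure Q_meas (\<Union>k0. heavy_weight k0)"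
      by (intro order_trans[OF emeasure_subadditive] add_mono emeasure_subadditive) auto
    then show ?thesis
      using emeasure_heavy_weight_le emeasure_not_good_jumps emeasure_bounded_jumps
      by (simp add: measure_def enn2real_leI)
  qed
  finally show ?thesis .
qed

end

lemma (in tube_setting) outer_prob_path_event_le:
  assumes "0 < \<epsilon>"
  shows "outer_prob Q_meas path_event \<le> exp (- T * rate_sum) * exp \<epsilon>"
proof (cases "path_event \<inter> good_jumps = {}")
  case True
  then have "outer_prob Q_meas path_event \<le> measure Q_meas (space Q_meas - good_jumps)"
    unfolding path_event_def by (intro outer_prob_le_measure) auto
  also have "\<dots> = 0"
    using emeasure_not_good_jumps by (simp add: measure_def)
  finally show ?thesis by (meson exp_gt_zero mult_pos_pos less_imp_le order_trans)
next
  case False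
  then obtain \<omega> where "\<omega> \<in> path_event" "\<omega> \<in> good_jumps" by blast
  then obtain g where "g \<in> \<Gamma>" "0 \<le> fst z" "0 \<le> snd z"
    using path_event_sample_path by metis
  then have "\<Gamma> \<noteq> {}" by blast
  define \<delta> where "\<delta> = \<epsilon> / (2 * T * real N)"
  have "0 < \<delta>" and \<epsilon>: "2 * T * real N * \<delta> = \<epsilon>"
    unfolding \<delta>_def using assms T_pos i_less_K by auto
  obtain \<theta>x \<theta>y \<kappa>x \<kappa>y where
    "\<And>l. l < N \<Longrightarrow> adapted_tilt rateRX fst (Ij n (i + l)) \<Gamma> T \<delta> (\<theta>x l) (\<kappa>x l)"
    "\<And>l. l < N \<Longrightarrow> adapted_tilt rateRY snd (Ij n (i + l)) \<Gamma> T \<delta> (\<theta>y l) (\<kappa>y l)"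
    "\<And>l. \<theta>x l < 1" "\<And>l. \<theta>y l < 1"
    by (rule exists_adapted_tilts[OF \<open>\<Gamma> \<noteq> {}\<close> \<open>0 < \<delta>\<close>]) blast
  then interpret tilted_tube M T f n i K \<theta> z \<theta>x \<theta>y \<kappa>x \<kappa>y \<delta>
    using \<open>0 \<le> fst z\<close> \<open>0 \<le> snd z\<close> by (intro tilted_tube.intro tube_setting_axioms tilted_tube_axioms.intro)
  have "outer_prob Q_meas path_event \<le> exp (- (T * rate_sum - \<epsilon>))"
    using outer_prob_path_event_le_tilted unfolding \<epsilon> .
  then show ?thesis by (simp add: exp_diff exp_minus field_simps)
qed

lemma nat_floor_mult_le:
  assumes "0 < \<theta>" "\<theta> \<le> 1"
  shows "nat \<lfloor>\<theta> * real n\<rfloor> \<le> n" "real (nat \<lfloor>\<theta> * real n\<rfloor>) / real n \<le> \<theta>"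
proof -
  have K: "real (nat \<lfloor>\<theta> * real n\<rfloor>) \<le> \<theta> * real n"
    using assms(1) by simp
  moreover have "\<theta> * real n \<le> real n"
    using mult_right_mono[OF assms(2), of "real n"] by simp
  ultimately show "nat \<lfloor>\<theta> * real n\<rfloor> \<le> n" by linarith
  show "real (nat \<lfloor>\<theta> * real n\<rfloor>) / real n \<le> \<theta>"
  proof (cases "n = 0")
    case False
    then show ?thesis using K by (simp add: divide_le_eq)
  qed (use assms(1) in simp)
qed

theorem proposition2p3:
  fixes f :: path2 and n i :: nat and T M \<theta> :: real and z :: "real \<times> real"
  assumes "f \<in> E2" and "T > 1" and "M > 1"
    and "0 < \<theta>" and "\<theta> \<le> 1"
    and "i < nat \<lfloor>\<theta> * real n\<rfloor>"
    and "supnorm2 (z - evalp f (real i / real n)) < 1 / (real n)^2"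
  shows "outer_prob Q_meas
           {\<omega> \<in> space Q_meas.
              restr_in (\<lambda>s. (1 / T) *\<^sub>R proc (T *\<^sub>R z) \<omega> (s * T - (real i / real n) * T))
                       (Gamma M T f n) {real i / real n .. \<theta>}}
         \<le> exp (- T * (\<Sum>j = i..<nat \<lfloor>\<theta> * real n\<rfloor>.
                     calE_X (Ij n j) (Gamma M T f n) T + calE_Y (Ij n j) (Gamma M T f n) T))"
proof -
  interpret tube_setting M T f n i "nat \<lfloor>\<theta> * real n\<rfloor>" \<theta> z
    using assms(2,3,6) nat_floor_mult_le[OF assms(4,5)] by unfold_locales simp_all
  have "outer_prob Q_meas path_event \<le> exp (- T * rate_sum)"
    by (rule le_of_le_mult_exp[OF exp_gt_zero outer_prob_path_event_le])
  then show ?thesis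
    unfolding path_event_def rate_sum_def .
qed

end
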